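(* Let $F,f,h_1,\dots,h_p\colon\mathbb R^n\times\mathbb R^m\to\mathbb R$ be continuously differentiable, $X\subset\mathbb R^n$ closed, $I=\{1,\dots,\ell\}$, $J=\{\ell+1,\dots,p\}$, $\Gamma(x):=\{y\mid h_i(x,y)\le0\ (i\in I),\ h_i(x,y)=0\ (i\in J)\}$, $\varphi(x):=\inf\{f(x,y)\mid y\in\Gamma(x)\}$, $S(x):=\operatorname{argmin}\{f(x,y)\mid y\in\Gamma(x)\}$, $h_0(x,y):=f(x,y)-\varphi(x)$, and $\varphi_p(x):=\sup\{F(x,y)\mid y\in S(x)\}$. Assume (A1'): for each $x$, $f(x,\cdot)$ and $h_i(x,\cdot)$, $i\in I$, are convex and $h_i(x,\cdot)$, $i\in J$, are affine. Assume $X\subset\operatorname{dom}\Gamma$, that $\Gamma$ is locally bounded at each point of $X$, that RCPLD$_S$ with respect to $\operatorname{dom}\Gamma$ holds at each point of $\operatorname{gph}S\cap(X\times\mathbb R^m)$, and that $X$ is nonempty and compact. Then there exists a pessimistic solution of the bilevel problem, i.e., a global minimizer of $\varphi_p$ over $X$.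
   Context: $\operatorname{dom}\Gamma:=\{x\mid\Gamma(x)\neq\emptyset\}$; $\inf\emptyset=+\infty$. $\Gamma$ is locally bounded at $\bar x$ if there are a bounded $B$ and a neighborhood $V$ of $\bar x$ with $\Gamma(x)\subset B$ for $x\in V$. A pair of finite families $((a^i)_{i\in I_1},(b^i)_{i\in I_2})$ is positive-linearly dependent if there are $\alpha_i\ge0$, $\beta_i$, not all zero, with $\sum\alpha_ia^i+\sum\beta_ib^i=0$. For $(\bar x,\bar y)\in\operatorname{gph}S$ let $I(\bar x,\bar y):=\{i\in I\mid h_i(\bar x,\bar y)=0\}$ and $\nabla_yh_0:=\nabla_yf$. RCPLD$_S$ holds at $(\bar x,\bar y)$ with respect to $\Omega$ if there are a neighborhood $U$ of $(\bar x,\bar y)$ and $\mathcal S\subset J$ such that: (i) $\{\nabla_yh_i(\bar x,\bar y)\mid i\in\mathcal S\}$ is a basis of the span of $\{\nabla_yh_i(\bar x,\bar y)\mid i\in J\}$; (ii) $(\nabla_yh_i(x,y))_{i\in J}$ has constant rank on $U\cap(\Omega\times\mathbb R^m)$; (iii) for each $K\subset\{0\}\cup I(\bar x,\bar y)$ with $((\nabla_yh_i(\bar x,\bar y))_{i\in K},(\nabla_yh_i(\bar x,\bar y))_{i\in\mathcal S})$ positive-linearly dependent, $(\nabla_yh_i(x,y))_{i\in K\cup\mathcal S}$ is linearly dependent for each $(x,y)\in U\cap(\Omega\times\mathbb R^m)$. *)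

theory Defs
  imports "HOL-Analysis.Analysis"
begin

definition cont_diff :: "('a::real_normed_vector \<Rightarrow> real) \<Rightarrow> bool" where
  "cont_diff g \<longleftrightarrow> (\<exists>g'. (\<forall>z. (g has_derivative blinfun_apply (g' z)) (at z)) \<and> continuous_on UNIV g')"

definition grad_y :: "((real^'n) \<times> (real^'m) \<Rightarrow> real) \<Rightarrow> real^'n \<Rightarrow> real^'m \<Rightarrow> real^'m" where
  "grad_y g x y = (\<chi> j. frechet_derivative g (at (x, y)) (0, axis j 1))"

definition Gam :: "(nat \<Rightarrow> (real^'n) \<times> (real^'m) \<Rightarrow> real) \<Rightarrow> nat \<Rightarrow> nat \<Rightarrow> real^'n \<Rightarrow> (real^'m) set" where
  "Gam h l p x = {y. (\<forall>i\<in>{1..l}. h i (x, y) \<le> 0) \<and> (\<forall>i\<in>{l+1..p}. h i (x, y) = 0)}"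

text \<open>Optimal value function (inf of the empty set is +infinity).\<close>
definition phi :: "((real^'n) \<times> (real^'m) \<Rightarrow> real) \<Rightarrow> (nat \<Rightarrow> (real^'n) \<times> (real^'m) \<Rightarrow> real) \<Rightarrow> nat \<Rightarrow> nat \<Rightarrow> real^'n \<Rightarrow> ereal" where
  "phi f h l p x = Inf ((\<lambda>y. ereal (f (x, y))) ` Gam h l p x)"

definition Sol :: "((real^'n) \<times> (real^'m) \<Rightarrow> real) \<Rightarrow> (nat \<Rightarrow> (real^'n) \<times> (real^'m) \<Rightarrow> real) \<Rightarrow> nat \<Rightarrow> nat \<Rightarrow> real^'n \<Rightarrow> (real^'m) set" where
  "Sol f h l p x = {y \<in> Gam h l p x. ereal (f (x, y)) = phi f h l p x}"

text \<open>Pessimistic value function (sup of the empty set is -infinity).\<close>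
definition phi_p :: "((real^'n) \<times> (real^'m) \<Rightarrow> real) \<Rightarrow> ((real^'n) \<times> (real^'m) \<Rightarrow> real) \<Rightarrow> (nat \<Rightarrow> (real^'n) \<times> (real^'m) \<Rightarrow> real) \<Rightarrow> nat \<Rightarrow> nat \<Rightarrow> real^'n \<Rightarrow> ereal" where
  "phi_p F f h l p x = Sup ((\<lambda>y. ereal (F (x, y))) ` Sol f h l p x)"

definition domG :: "(nat \<Rightarrow> (real^'n) \<times> (real^'m) \<Rightarrow> real) \<Rightarrow> nat \<Rightarrow> nat \<Rightarrow> (real^'n) set" where
  "domG h l p = {x. Gam h l p x \<noteq> {}}"

definition locally_bounded_at :: "('a::topological_space \<Rightarrow> 'b::metric_space set) \<Rightarrow> 'a \<Rightarrow> bool" where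
  "locally_bounded_at G xb \<longleftrightarrow> (\<exists>B V. bounded B \<and> open V \<and> xb \<in> V \<and> (\<forall>x\<in>V. G x \<subseteq> B))"

text \<open>Linear dependence of an indexed finite family (multiplicities matter).\<close>
definition fam_lin_dep :: "'i set \<Rightarrow> ('i \<Rightarrow> 'v::real_vector) \<Rightarrow> bool" where
  "fam_lin_dep A v \<longleftrightarrow> (\<exists>c. (\<exists>i\<in>A. c i \<noteq> 0) \<and> (\<Sum>i\<in>A. c i *\<^sub>R v i) = 0)"

definition pos_lin_dep :: "'i set \<Rightarrow> 'i set \<Rightarrow> ('i \<Rightarrow> 'v::real_vector) \<Rightarrow> bool" where
  "pos_lin_dep A B v \<longleftrightarrow> (\<exists>\<alpha> \<beta>. (\<forall>i\<in>A. \<alpha> i \<ge> 0) \<and> ((\<exists>i\<in>A. \<alpha> i \<noteq> 0) \<or> (\<exists>i\<in>B. \<beta> i \<noteq> 0))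
      \<and> (\<Sum>i\<in>A. \<alpha> i *\<^sub>R v i) + (\<Sum>i\<in>B. \<beta> i *\<^sub>R v i) = 0)"

text \<open>Gradients in y of h_i, with h_0 := f - phi, whose y-gradient is that of f.\<close>
definition gy :: "((real^'n) \<times> (real^'m) \<Rightarrow> real) \<Rightarrow> (nat \<Rightarrow> (real^'n) \<times> (real^'m) \<Rightarrow> real) \<Rightarrow> nat \<Rightarrow> real^'n \<Rightarrow> real^'m \<Rightarrow> real^'m" where
  "gy f h i x y = (if i = 0 then grad_y f x y else grad_y (h i) x y)"

definition RCPLD_S :: "((real^'n) \<times> (real^'m) \<Rightarrow> real) \<Rightarrow> (nat \<Rightarrow> (real^'n) \<times> (real^'m) \<Rightarrow> real) \<Rightarrow> nat \<Rightarrow> nat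
    \<Rightarrow> (real^'n) set \<Rightarrow> real^'n \<Rightarrow> real^'m \<Rightarrow> bool" where
  "RCPLD_S f h l p \<Omega> xb yb \<longleftrightarrow>
    (\<exists>U \<S>. open U \<and> (xb, yb) \<in> U \<and> \<S> \<subseteq> {l+1..p} \<and>
      \<not> fam_lin_dep \<S> (\<lambda>i. gy f h i xb yb) \<and>
      span ((\<lambda>i. gy f h i xb yb) ` \<S>) = span ((\<lambda>i. gy f h i xb yb) ` {l+1..p}) \<and>
      (\<forall>x y. (x, y) \<in> U \<and> x \<in> \<Omega> \<longrightarrow>
          dim ((\<lambda>i. gy f h i x y) ` {l+1..p}) = dim ((\<lambda>i. gy f h i xb yb) ` {l+1..p})) \<and>
      (\<forall>K. K \<subseteq> {0} \<union> {i\<in>{1..l}. h i (xb, yb) = 0} \<longrightarrow>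
          pos_lin_dep K \<S> (\<lambda>i. gy f h i xb yb) \<longrightarrow>
          (\<forall>x y. (x, y) \<in> U \<and> x \<in> \<Omega> \<longrightarrow> fam_lin_dep (K \<union> \<S>) (\<lambda>i. gy f h i x y))))"

end

theory Submission
  imports Defs
begin

text \<open>Since \<open>X\<close> is compact it suffices that \<open>\<phi>\<^sub>p\<close> be sequentially lower semicontinuous on \<open>X\<close>,
  and since \<open>F\<close> is continuous this follows from inner semicontinuity of the solution map:
  for \<open>x\<^sub>k \<rightarrow> x\<close> in \<open>X\<close> and \<open>y \<in> S(x)\<close> there are points of \<open>S(x\<^sub>k)\<close> arbitrarily close to \<open>y\<close>.
  Write \<open>S(x\<^sub>k)\<close> as the feasible set of \<open>h\<^sub>0 = f - \<phi> \<le> 0\<close>, \<open>h\<^sub>i \<le> 0\<close> (\<open>i \<in> I\<close>), \<open>h\<^sub>j = 0\<close> (\<open>j \<in> J\<close>).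
  Local boundedness makes \<open>\<phi>\<close> lower semicontinuous, so the constraint violation at \<open>y\<close> tends
  to \<open>0\<close> and the minimisers \<open>w\<^sub>k\<close> of \<open>violation\<^sub>k + \<parallel>\<cdot> - y\<parallel>\<^sup>2\<close> converge to \<open>y\<close>. If the \<open>w\<^sub>k\<close>
  were eventually infeasible, Fermat's rule would give multipliers whose limits, after replacing
  the equality gradients by the RCPLD basis, form a positive dependence of the gradients at
  \<open>(x, y)\<close>. Reduced to minimal support and transported back to \<open>w\<^sub>k\<close> by RCPLD, it yields nonnegative
  dependences at \<open>w\<^sub>k\<close> pairing positively with the multipliers, which convexity of the
  constraints forbids. So the \<open>w\<^sub>k\<close> are frequently feasible.\<close>

lemma finite_family_convergent_subseq:
  fixes X :: "nat \<Rightarrow> 'i \<Rightarrow> real"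
  assumes "finite I" and "\<And>k i. i \<in> I \<Longrightarrow> \<bar>X k i\<bar> \<le> B"
  shows "\<exists>r L. strict_mono r \<and> (\<forall>i\<in>I. (\<lambda>k. X (r k) i) \<longlonglongrightarrow> L i)"
  using assms
proof (induction I rule: finite_induct)
  case empty
  show ?case by (intro exI[of _ "\<lambda>n. n"]) (simp add: strict_mono_def)
next
  case (insert i I)
  obtain r L where r: "strict_mono r" "\<forall>j\<in>I. (\<lambda>k. X (r k) j) \<longlonglongrightarrow> L j"
    using insert.IH insert.prems by blast
  have "bounded (range (\<lambda>k. X (r k) i))"
    unfolding bounded_real using insert.prems by blast
  then obtain l r' where r': "strict_mono r'" "((\<lambda>k. X (r k) i) \<circ> r') \<longlonglongrightarrow> l"
    using bounded_imp_convergent_subsequence by blast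
  have "(\<lambda>k. X ((r \<circ> r') k) j) \<longlonglongrightarrow> (L(i := l)) j" if "j \<in> insert i I" for j
  proof (cases "j = i")
    case True
    then show ?thesis using r' by (simp add: o_def)
  next
    case False
    then have "((\<lambda>k. X (r k) j) \<circ> r') \<longlonglongrightarrow> L j"
      using that r(2) LIMSEQ_subseq_LIMSEQ[OF _ r'(1)] by blast
    then show ?thesis using False by (simp add: o_def)
  qed
  moreover have "strict_mono (r \<circ> r')" using r r' by (simp add: strict_mono_o)
  ultimately show ?case by blast
qed

lemma LIMSEQ_eventually_eq_unique:
  fixes a b :: "'a::t2_space"
  assumes "f \<longlonglongrightarrow> a" and "g \<longlonglongrightarrow> b" and "eventually (\<lambda>k. f k = g k) sequentially"
  shows "a = b"
proof -
  have "g \<longlonglongrightarrow> a" using Lim_transform_eventually[OF assms(1,3)] .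
  then show ?thesis using assms(2) LIMSEQ_unique by blast
qed

lemma has_real_derivative_pos_part_square:
  "((\<lambda>t. (max t 0)\<^sup>2) has_real_derivative 2 * max t (0::real)) (at t)"
proof (cases "t = 0")
  case True
  have "((\<lambda>y. ((max y 0)\<^sup>2 - (max 0 0)\<^sup>2) / (y - 0)) \<longlongrightarrow> (0::real)) (at 0)"
  proof (rule Lim_null_comparison)
    have "norm (((max y 0)\<^sup>2 - (max 0 0)\<^sup>2) / (y - 0)) \<le> \<bar>y\<bar>" for y :: real
      by (cases "y \<ge> 0") (auto simp: power2_eq_square abs_mult)
    then show "\<forall>\<^sub>F y in at 0. norm (((max y 0)\<^sup>2 - (max 0 0)\<^sup>2) / (y - 0)) \<le> \<bar>y\<bar>"
      by simp
    show "((\<lambda>y::real. \<bar>y\<bar>) \<longlongrightarrow> 0) (at 0)"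
      using tendsto_rabs[OF tendsto_ident_at[of "0::real" UNIV]] by simp
  qed
  then show ?thesis using True by (simp add: has_field_derivative_iff)
next
  case False
  then consider "t > 0" | "t < 0" by linarith
  then show ?thesis
  proof cases
    case 1
    have "((\<lambda>t. t\<^sup>2) has_real_derivative 2 * max t 0) (at t)"
      using 1 by (auto intro!: derivative_eq_intros)
    then show ?thesis
      by (rule has_field_derivative_transform_within_open[where S="{0<..}"]) (use 1 in auto)
  next
    case 2
    have "((\<lambda>t. 0) has_real_derivative 2 * max t 0) (at t)" using 2 by simp
    then show ?thesis
      by (rule has_field_derivative_transform_within_open[where S="{..<0}"]) (use 2 in auto)
  qed
qed

lemma convex_on_ge_tangent:
  fixes g :: "'a::real_normed_vector \<Rightarrow> real"
  assumes convex: "convex_on UNIV g" and deriv: "(g has_derivative g') (at w)"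
  shows "g w + g' (u - w) \<le> g u"
proof -
  define \<phi> where "\<phi> t = g (w + t *\<^sub>R (u - w))" for t :: real
  have "convex_on UNIV \<phi>"
  proof (rule convex_onI)
    fix t x y :: real assume "t > 0" "t < 1"
    have "w + ((1 - t) *\<^sub>R x + t *\<^sub>R y) *\<^sub>R (u - w)
        = (1 - t) *\<^sub>R (w + x *\<^sub>R (u - w)) + t *\<^sub>R (w + y *\<^sub>R (u - w))"
      by (simp add: algebra_simps)
    then show "\<phi> ((1 - t) *\<^sub>R x + t *\<^sub>R y) \<le> (1 - t) * \<phi> x + t * \<phi> y"
      unfolding \<phi>_def using convex_onD[OF convex, of t] \<open>t > 0\<close> \<open>t < 1\<close> by simp
  qed simp
  moreover have "(\<phi> has_real_derivative g' (u - w)) (at 0)"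
  proof -
    have "((\<lambda>t. w + t *\<^sub>R (u - w)) has_derivative (\<lambda>t. t *\<^sub>R (u - w))) (at 0)"
      by (auto intro!: derivative_eq_intros)
    from has_derivative_compose[OF this] deriv
    have "(\<phi> has_derivative (\<lambda>t. g' (t *\<^sub>R (u - w)))) (at 0)"
      unfolding \<phi>_def by (simp add: o_def)
    moreover have "g' (t *\<^sub>R (u - w)) = g' (u - w) * t" for t
      using linear_scale[OF has_derivative_linear[OF deriv]] by simp
    ultimately show ?thesis unfolding has_field_derivative_def by simp
  qed
  ultimately have "\<phi> 1 - \<phi> 0 \<ge> g' (u - w) * (1 - 0)"
    by (intro convex_on_imp_above_tangent[of UNIV \<phi>]) (auto simp: has_field_derivative_at_within)
  then show ?thesis unfolding \<phi>_def by simp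
qed

text \<open>The vanishing combination of gradients makes \<open>\<Sum> e i * val i\<close> minimal at \<open>w\<close> (the terms
  on \<open>K\<close> are convex, those on \<open>S\<close> affine), and at the feasible point \<open>u\<close> it is \<open>\<le> 0\<close>.\<close>
lemma nonneg_gradient_dependence_value_nonpos:
  fixes val :: "'i \<Rightarrow> 'a::real_inner \<Rightarrow> real" and G :: "'i \<Rightarrow> 'a"
  assumes fin: "finite K" "finite S" and disj: "K \<inter> S = {}"
    and convex: "\<And>i. i \<in> K \<Longrightarrow> convex_on UNIV (val i)"
    and deriv: "\<And>i. i \<in> K \<Longrightarrow> (val i has_derivative (\<lambda>v. G i \<bullet> v)) (at w)"
    and affine: "\<And>j. j \<in> S \<Longrightarrow> val j w - val j u = G j \<bullet> (w - u)"
    and nonneg: "\<And>i. i \<in> K \<Longrightarrow> e i \<ge> 0"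
    and dep: "(\<Sum>i\<in>K \<union> S. e i *\<^sub>R G i) = 0"
    and feasible: "\<And>i. i \<in> K \<Longrightarrow> val i u \<le> 0" "\<And>j. j \<in> S \<Longrightarrow> val j u = 0"
  shows "(\<Sum>i\<in>K \<union> S. e i * val i w) \<le> 0"
proof -
  have "0 = (\<Sum>i\<in>K \<union> S. e i *\<^sub>R G i) \<bullet> (u - w)" using dep by simp
  also have "\<dots> = (\<Sum>i\<in>K. e i * (G i \<bullet> (u - w))) + (\<Sum>j\<in>S. e j * (G j \<bullet> (u - w)))"
    using fin disj by (simp add: sum.union_disjoint inner_sum_left inner_add_left)
  also have "(\<Sum>i\<in>K. e i * (G i \<bullet> (u - w))) \<le> (\<Sum>i\<in>K. e i * (- val i w))"
  proof (rule sum_mono)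
    fix i assume i: "i \<in> K"
    have "val i w + G i \<bullet> (u - w) \<le> val i u"
      using convex_on_ge_tangent[OF convex deriv] i by blast
    then show "e i * (G i \<bullet> (u - w)) \<le> e i * (- val i w)"
      using feasible(1)[OF i] nonneg[OF i] by (intro mult_left_mono) auto
  qed
  also have "(\<Sum>j\<in>S. e j * (G j \<bullet> (u - w))) = (\<Sum>j\<in>S. e j * (- val j w))"
    using affine feasible(2) by (intro sum.cong) (auto simp: inner_diff_right)
  finally show ?thesis
    using fin disj by (simp add: sum.union_disjoint sum_negf)
qed

lemma compact_attains_inf_if_seq_lsc:
  fixes g :: "'a::metric_space \<Rightarrow> ereal"
  assumes "compact X" and "X \<noteq> {}"
    and lsc: "\<And>xs x m. (\<And>k. xs k \<in> X) \<Longrightarrow> x \<in> X \<Longrightarrow> xs \<longlonglongrightarrow> x \<Longrightarrow> (\<lambda>k. g (xs k)) \<longlonglongrightarrow> m \<Longrightarrow> g x \<le> m"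
  shows "\<exists>x\<in>X. \<forall>z\<in>X. g x \<le> g z"
proof -
  define m where "m = Inf (g ` X)"
  obtain ms where ms: "decseq ms" "range ms \<subseteq> g ` X" "m = (INF k. ms k)"
    using Inf_countable_INF[of "g ` X"] \<open>X \<noteq> {}\<close> unfolding m_def by blast
  have "\<forall>k. \<exists>x. x \<in> X \<and> g x = ms k"
  proof
    fix k
    have "ms k \<in> g ` X" using ms(2) by blast
    then show "\<exists>x. x \<in> X \<and> g x = ms k" by force
  qed
  then obtain xs where xs: "\<And>k. xs k \<in> X" "\<And>k. g (xs k) = ms k"
    using choice[of "\<lambda>k x. x \<in> X \<and> g x = ms k"] by auto
  obtain x r where x: "x \<in> X" "strict_mono r" "(xs \<circ> r) \<longlonglongrightarrow> x"
    using compact_imp_seq_compact[OF \<open>compact X\<close>] xs(1) unfolding seq_compact_def by meson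
  have "ms \<longlonglongrightarrow> m" using LIMSEQ_INF[OF ms(1)] ms(3) by simp
  then have "(\<lambda>k. g ((xs \<circ> r) k)) \<longlonglongrightarrow> m"
    using LIMSEQ_subseq_LIMSEQ[OF _ x(2)] by (simp add: o_def xs(2))
  then have "g x \<le> m"
    using lsc[of "xs \<circ> r"] x xs(1) by simp
  moreover have "m \<le> g z" if "z \<in> X" for z
    unfolding m_def using that by (rule INF_lower)
  ultimately show ?thesis using x(1) by (meson order_trans)
qed

section \<open>Linear dependence of finite families\<close>

lemma span_image_finite_sum:
  fixes v :: "'i \<Rightarrow> 'a::real_vector"
  assumes "finite S" and "x \<in> span (v ` S)"
  shows "\<exists>c. x = (\<Sum>i\<in>S. c i *\<^sub>R v i)"
  using assms
proof (induction S arbitrary: x rule: finite_induct)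
  case (insert i S)
  obtain k where "x - k *\<^sub>R v i \<in> span (v ` S)"
    using insert.prems by (auto simp: span_insert)
  with insert.IH obtain c where c: "x - k *\<^sub>R v i = (\<Sum>j\<in>S. c j *\<^sub>R v j)" by blast
  have "(\<Sum>j\<in>S. (c(i := k)) j *\<^sub>R v j) = (\<Sum>j\<in>S. c j *\<^sub>R v j)"
    using insert.hyps by (intro sum.cong) auto
  then have "x = (\<Sum>j\<in>insert i S. (c(i := k)) j *\<^sub>R v j)"
    using insert.hyps c by (simp add: algebra_simps)
  then show ?case by blast
qed simp

lemma fam_lin_dep_normalized:
  fixes v :: "'i \<Rightarrow> 'a::real_vector"
  assumes fin: "finite I" and dep: "fam_lin_dep I v"
  obtains e where "(\<Sum>i\<in>I. \<bar>e i\<bar>) = 1" "(\<Sum>i\<in>I. e i *\<^sub>R v i) = 0" "(\<Sum>i\<in>I. e i * c i) \<ge> 0"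
proof -
  obtain e0 i0 where e0: "i0 \<in> I" "e0 i0 \<noteq> 0" "(\<Sum>i\<in>I. e0 i *\<^sub>R v i) = 0"
    using dep unfolding fam_lin_dep_def by blast
  define s where "s = (\<Sum>i\<in>I. \<bar>e0 i\<bar>)"
  have "\<bar>e0 i0\<bar> \<le> s" unfolding s_def using fin e0(1) by (intro member_le_sum) auto
  then have s: "s > 0" using e0(2) by simp
  define \<sigma> :: real where "\<sigma> = (if (\<Sum>i\<in>I. e0 i * c i) \<ge> 0 then 1 else -1)"
  define e where "e i = \<sigma> / s * e0 i" for i
  have "\<bar>\<sigma>\<bar> = 1" by (simp add: \<sigma>_def)
  then have "(\<Sum>i\<in>I. \<bar>e i\<bar>) = (\<Sum>i\<in>I. \<bar>e0 i\<bar>) / s"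
    unfolding e_def using s by (simp add: abs_mult sum_divide_distrib)
  then have "(\<Sum>i\<in>I. \<bar>e i\<bar>) = 1" using s by (simp add: s_def)
  moreover have "(\<Sum>i\<in>I. e i *\<^sub>R v i) = (\<sigma> / s) *\<^sub>R (\<Sum>i\<in>I. e0 i *\<^sub>R v i)"
    unfolding e_def by (simp add: scaleR_sum_right)
  then have "(\<Sum>i\<in>I. e i *\<^sub>R v i) = 0" using e0(3) by simp
  moreover have "(\<Sum>i\<in>I. e i * c i) = \<sigma> / s * (\<Sum>i\<in>I. e0 i * c i)"
    by (simp add: e_def sum_distrib_left mult.assoc)
  then have "(\<Sum>i\<in>I. e i * c i) \<ge> 0"
    using s by (simp add: \<sigma>_def mult_nonneg_nonpos)
  ultimately show ?thesis using that by blast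
qed

lemma fam_lin_dep_limit:
  fixes v :: "nat \<Rightarrow> 'i \<Rightarrow> 'a::real_normed_vector"
  assumes fin: "finite I" and conv: "\<forall>i\<in>I. (\<lambda>k. v k i) \<longlonglongrightarrow> vs i"
    and dep: "frequently (\<lambda>k. fam_lin_dep I (v k)) sequentially"
  obtains r e eh where "strict_mono r"
    "\<And>k. (\<Sum>i\<in>I. e k i *\<^sub>R v (r k) i) = 0" "\<And>k. (\<Sum>i\<in>I. e k i * c i) \<ge> 0"
    "\<And>i. i \<in> I \<Longrightarrow> (\<lambda>k. e k i) \<longlonglongrightarrow> eh i"
    "(\<Sum>i\<in>I. \<bar>eh i\<bar>) = 1" "(\<Sum>i\<in>I. eh i *\<^sub>R vs i) = 0" "(\<Sum>i\<in>I. eh i * c i) \<ge> 0"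
proof -
  obtain r0 :: "nat \<Rightarrow> nat" where r0: "strict_mono r0" "\<And>n. fam_lin_dep I (v (r0 n))"
    using not_eventually_sequentiallyD dep unfolding frequently_def by blast
  have "\<forall>n. \<exists>e. (\<Sum>i\<in>I. \<bar>e i\<bar>) = 1 \<and> (\<Sum>i\<in>I. e i *\<^sub>R v (r0 n) i) = 0 \<and> (\<Sum>i\<in>I. e i * c i) \<ge> 0"
  proof
    fix n
    obtain e where "(\<Sum>i\<in>I. \<bar>e i\<bar>) = 1" "(\<Sum>i\<in>I. e i *\<^sub>R v (r0 n) i) = 0" "(\<Sum>i\<in>I. e i * c i) \<ge> 0"
      using fam_lin_dep_normalized[OF fin r0(2)] .
    then show "\<exists>e. (\<Sum>i\<in>I. \<bar>e i\<bar>) = 1 \<and> (\<Sum>i\<in>I. e i *\<^sub>R v (r0 n) i) = 0 \<and> (\<Sum>i\<in>I. e i * c i) \<ge> 0"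
      by blast
  qed
  then obtain e0 where e0: "\<And>n. (\<Sum>i\<in>I. \<bar>e0 n i\<bar>) = 1"
      "\<And>n. (\<Sum>i\<in>I. e0 n i *\<^sub>R v (r0 n) i) = 0" "\<And>n. (\<Sum>i\<in>I. e0 n i * c i) \<ge> 0"
    by (metis (no_types))
  have "\<bar>e0 n i\<bar> \<le> 1" if "i \<in> I" for n i
    using member_le_sum[of i I "\<lambda>i. \<bar>e0 n i\<bar>"] fin that e0(1)[of n] by simp
  then obtain r1 eh where r1: "strict_mono r1" and eh: "\<And>i. i \<in> I \<Longrightarrow> (\<lambda>k. e0 (r1 k) i) \<longlonglongrightarrow> eh i"
    using finite_family_convergent_subseq[OF fin, of "\<lambda>k i. e0 k i" 1] by blast
  define e where "e k = e0 (r1 k)" for k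
  have lim_e: "(\<lambda>k. e k i) \<longlonglongrightarrow> eh i" if "i \<in> I" for i
    using eh[OF that] by (simp add: e_def)
  have lim_v: "(\<lambda>k. v ((r0 \<circ> r1) k) i) \<longlonglongrightarrow> vs i" if "i \<in> I" for i
    using LIMSEQ_subseq_LIMSEQ[OF bspec[OF conv that] strict_mono_o[OF r0(1) r1]] by (simp add: o_def)
  have "(\<lambda>k. \<Sum>i\<in>I. \<bar>e k i\<bar>) \<longlonglongrightarrow> (\<Sum>i\<in>I. \<bar>eh i\<bar>)"
    by (intro tendsto_intros lim_e)
  then have "(\<Sum>i\<in>I. \<bar>eh i\<bar>) = 1"
    by (simp add: e_def e0(1) LIMSEQ_const_iff)
  moreover have "(\<lambda>k. \<Sum>i\<in>I. e k i *\<^sub>R v ((r0 \<circ> r1) k) i) \<longlonglongrightarrow> (\<Sum>i\<in>I. eh i *\<^sub>R vs i)"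
    by (intro tendsto_intros lim_e lim_v)
  then have "(\<Sum>i\<in>I. eh i *\<^sub>R vs i) = 0"
    by (simp add: e_def e0(2) LIMSEQ_const_iff)
  moreover have "(\<lambda>k. \<Sum>i\<in>I. e k i * c i) \<longlonglongrightarrow> (\<Sum>i\<in>I. eh i * c i)"
    by (intro tendsto_intros lim_e)
  then have "(\<Sum>i\<in>I. eh i * c i) \<ge> 0"
    by (rule tendsto_lowerbound) (simp_all add: e_def e0(3))
  ultimately show ?thesis
    using that[OF strict_mono_o[OF r0(1) r1], of e eh] e0 lim_e by (simp add: e_def)
qed

lemma fam_lin_indep_eventually:
  fixes v :: "nat \<Rightarrow> 'i \<Rightarrow> 'a::real_normed_vector"
  assumes fin: "finite I" and indep: "\<not> fam_lin_dep I vs"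
    and conv: "\<forall>i\<in>I. (\<lambda>k. v k i) \<longlonglongrightarrow> vs i"
  shows "eventually (\<lambda>k. \<not> fam_lin_dep I (v k)) sequentially"
proof (rule ccontr)
  assume "\<not> ?thesis"
  then have "frequently (\<lambda>k. fam_lin_dep I (v k)) sequentially"
    by (simp add: not_eventually)
  then obtain r e eh where "strict_mono r"
      "\<And>k. (\<Sum>i\<in>I. e k i *\<^sub>R v (r k) i) = 0" "\<And>k. (\<Sum>i\<in>I. e k i * 0) \<ge> 0"
      "\<And>i. i \<in> I \<Longrightarrow> (\<lambda>k. e k i) \<longlonglongrightarrow> eh i"
      "(\<Sum>i\<in>I. \<bar>eh i\<bar>) = 1" "(\<Sum>i\<in>I. eh i *\<^sub>R vs i) = 0" "(\<Sum>i\<in>I. eh i * 0) \<ge> (0::real)"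
    by (rule fam_lin_dep_limit[where c="\<lambda>_. 0", OF fin conv]) (rule that)
  moreover have "\<exists>i\<in>I. eh i \<noteq> 0"
  proof (rule ccontr)
    assume "\<not> (\<exists>i\<in>I. eh i \<noteq> 0)"
    then have "(\<Sum>i\<in>I. \<bar>eh i\<bar>) = 0" by simp
    with \<open>(\<Sum>i\<in>I. \<bar>eh i\<bar>) = 1\<close> show False by simp
  qed
  ultimately have "fam_lin_dep I vs"
    unfolding fam_lin_dep_def by blast
  with indep show False ..
qed

lemma dim_image_fam_lin_indep:
  fixes v :: "'i \<Rightarrow> 'a::real_vector"
  assumes fin: "finite S" and indep: "\<not> fam_lin_dep S v"
  shows "dim (v ` S) = card S"
proof -
  have inj: "inj_on v S"
  proof (rule inj_onI, rule ccontr)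
    fix i j assume ij: "i \<in> S" "j \<in> S" "v i = v j" "i \<noteq> j"
    define c where "c k = (if k = i then 1 else if k = j then -1 else (0::real))" for k
    have "(\<Sum>k\<in>S. c k *\<^sub>R v k) = (\<Sum>k\<in>{i, j}. c k *\<^sub>R v k)"
      using fin ij by (intro sum.mono_neutral_right) (auto simp: c_def)
    also have "\<dots> = 0" using ij by (simp add: c_def)
    finally have "fam_lin_dep S v"
      unfolding fam_lin_dep_def using ij(1) by (intro exI[of _ c]) (auto simp: c_def)
    with indep show False ..
  qed
  have "independent (v ` S)"
  proof
    assume "dependent (v ` S)"
    then obtain u where u: "\<exists>x\<in>v ` S. u x \<noteq> 0" "(\<Sum>x\<in>v ` S. u x *\<^sub>R x) = 0"
      using dependent_finite[of "v ` S"] fin by auto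
    then have "(\<Sum>i\<in>S. u (v i) *\<^sub>R v i) = 0"
      by (simp add: sum.reindex[OF inj])
    with u(1) have "fam_lin_dep S v"
      unfolding fam_lin_dep_def by (intro exI[of _ "u \<circ> v"]) auto
    with indep show False ..
  qed
  then show ?thesis
    by (simp add: dim_eq_card_independent card_image[OF inj])
qed

lemma span_subset_if_dim_eq:
  fixes v vs :: "'i \<Rightarrow> 'a::euclidean_space"
  assumes finJ: "finite J" and SJ: "S \<subseteq> J"
    and indep: "\<not> fam_lin_dep S v" and indep_s: "\<not> fam_lin_dep S vs"
    and dim_eq: "dim (v ` J) = dim (vs ` J)" and span_eq: "span (vs ` S) = span (vs ` J)"
  shows "span (v ` J) \<subseteq> span (v ` S)"
proof -
  have finS: "finite S" using finite_subset[OF SJ finJ] .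
  have "dim (vs ` J) = dim (vs ` S)"
    using span_eq dim_span by metis
  then have "dim (v ` J) = dim (v ` S)"
    using dim_eq dim_image_fam_lin_indep[OF finS indep] dim_image_fam_lin_indep[OF finS indep_s] by simp
  moreover have "span (v ` S) \<subseteq> span (v ` J)" using SJ by (intro span_mono) auto
  ultimately have "span (v ` S) = span (v ` J)"
    by (intro subspace_dim_equal) auto
  then show ?thesis by simp
qed

text \<open>Moving along a nonzero direction \<open>d\<close> supported in the support of \<open>c\<close> until the first
  coordinate of \<open>c\<close> vanishes (the ratio test of the simplex method).\<close>
lemma ratio_test_shrinks_support:
  fixes v :: "'i \<Rightarrow> 'a::real_vector" and c d ll :: "'i \<Rightarrow> real"
  assumes fin: "finite A" and K: "K = {i\<in>A. c i \<noteq> 0}" and c: "\<forall>i\<in>A. c i \<ge> 0"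
    and d_out: "\<forall>i\<in>A - K. d i = 0" and d_ne: "\<exists>i\<in>K. d i \<noteq> 0"
    and dv: "(\<Sum>i\<in>B. d i *\<^sub>R v i) = 0" and dl: "(\<Sum>i\<in>B. d i * ll i) = 0"
  obtains c' where "\<And>i. i \<in> A \<Longrightarrow> c' i \<ge> 0" "{i\<in>A. c' i \<noteq> 0} \<subset> K"
    "(\<Sum>i\<in>B. c' i *\<^sub>R v i) = (\<Sum>i\<in>B. c i *\<^sub>R v i)" "(\<Sum>i\<in>B. c' i * ll i) = (\<Sum>i\<in>B. c i * ll i)"
proof -
  define s :: real where "s = (if \<exists>i\<in>K. d i < 0 then 1 else -1)"
  define e where "e i = s * d i" for i
  have neg: "\<exists>i\<in>K. e i < 0"
    using d_ne by (auto simp: e_def s_def linorder_neq_iff)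
  define M where "M = {i\<in>K. e i < 0}"
  have M: "finite M" "M \<noteq> {}" using fin neg by (auto simp: M_def K)
  define \<tau> where "\<tau> = Min ((\<lambda>i. c i / - e i) ` M)"
  have "\<tau> \<in> (\<lambda>i. c i / - e i) ` M"
    unfolding \<tau>_def using M by (intro Min_in) auto
  then obtain i1 where i1: "i1 \<in> M" "\<tau> = c i1 / - e i1" by blast
  have \<tau>_le: "\<tau> \<le> c i / - e i" if "i \<in> M" for i
    unfolding \<tau>_def using M that by auto
  have c_pos: "c i > 0" if "i \<in> K" for i
    using c that K by fastforce
  have "\<tau> > 0" using i1 c_pos by (auto simp: M_def intro!: divide_pos_neg)
  define c' where "c' i = c i + \<tau> * e i" for i
  have nonneg: "c' i \<ge> 0" if "i \<in> A" for i
  proof (cases "i \<in> M")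
    case True
    then have e: "- e i > 0" by (simp add: M_def)
    have "\<tau> * - e i \<le> c i / - e i * - e i"
      using \<tau>_le[OF True] e by (intro mult_right_mono) auto
    then show ?thesis using e by (simp add: c'_def)
  next
    case False
    then show ?thesis
      using that c \<open>\<tau> > 0\<close> d_out by (auto simp: c'_def M_def e_def K)
  qed
  have support: "{i\<in>A. c' i \<noteq> 0} \<subset> K"
  proof -
    have "c' i1 = 0" using i1 by (auto simp: c'_def M_def)
    moreover have "i1 \<in> K" using i1 by (simp add: M_def)
    ultimately show ?thesis
      using d_out by (auto simp: c'_def e_def K)
  qed
  have sum_v: "(\<Sum>i\<in>B. c' i *\<^sub>R v i) = (\<Sum>i\<in>B. c i *\<^sub>R v i) + (\<tau> * s) *\<^sub>R (\<Sum>i\<in>B. d i *\<^sub>R v i)"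
    by (simp add: c'_def e_def scaleR_add_left sum.distrib scaleR_sum_right mult.assoc)
  have sum_l: "(\<Sum>i\<in>B. c' i * ll i) = (\<Sum>i\<in>B. c i * ll i) + \<tau> * s * (\<Sum>i\<in>B. d i * ll i)"
    by (simp add: c'_def e_def distrib_right sum.distrib sum_distrib_left mult.assoc)
  show ?thesis
  proof (rule that)
    show "\<And>i. i \<in> A \<Longrightarrow> c' i \<ge> 0" by (fact nonneg)
    show "{i\<in>A. c' i \<noteq> 0} \<subset> K" by (fact support)
    show "(\<Sum>i\<in>B. c' i *\<^sub>R v i) = (\<Sum>i\<in>B. c i *\<^sub>R v i)" using sum_v dv by simp
    show "(\<Sum>i\<in>B. c' i * ll i) = (\<Sum>i\<in>B. c i * ll i)" using sum_l dl by simp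
  qed
qed

text \<open>A Caratheodory-type reduction: a positive dependence of minimal support \<open>K\<close> is, up to
  scaling, the only dependence supported on \<open>K \<union> S\<close>.\<close>
lemma minimal_positive_dependence:
  fixes v :: "'i \<Rightarrow> 'a::real_vector" and ll :: "'i \<Rightarrow> real"
  assumes fin: "finite A" "finite S" and disj: "A \<inter> S = {}" and indep: "\<not> fam_lin_dep S v"
    and c0: "\<forall>i\<in>A. c0 i \<ge> 0 \<and> (c0 i \<noteq> 0 \<longrightarrow> Q i)"
      "(\<Sum>i\<in>A \<union> S. c0 i *\<^sub>R v i) = 0" "(\<Sum>i\<in>A \<union> S. c0 i * ll i) > 0"
  obtains c K where "K \<subseteq> A" "K \<noteq> {}" "\<And>i. i \<in> K \<Longrightarrow> c i > 0 \<and> Q i" "\<And>i. i \<in> A - K \<Longrightarrow> c i = 0"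
    "(\<Sum>i\<in>A \<union> S. c i *\<^sub>R v i) = 0" "(\<Sum>i\<in>A \<union> S. c i * ll i) > 0"
    "\<forall>d. (\<forall>i\<in>A - K. d i = 0) \<and> (\<Sum>i\<in>A \<union> S. d i *\<^sub>R v i) = 0 \<longrightarrow> (\<exists>t. \<forall>i\<in>A \<union> S. d i = t * c i)"
proof -
  define D where "D c \<longleftrightarrow> (\<forall>i\<in>A. c i \<ge> 0 \<and> (c i \<noteq> 0 \<longrightarrow> Q i))
      \<and> (\<Sum>i\<in>A \<union> S. c i *\<^sub>R v i) = 0 \<and> (\<Sum>i\<in>A \<union> S. c i * ll i) > 0" for c
  have "D c0" using c0 by (simp add: D_def)
  then obtain c where Dc: "D c" and min: "\<And>c'. D c' \<Longrightarrow> card {i\<in>A. c i \<noteq> 0} \<le> card {i\<in>A. c' i \<noteq> 0}"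
    using ex_has_least_nat[of D c0 "\<lambda>c. card {i\<in>A. c i \<noteq> 0}"] by blast
  define K where "K = {i\<in>A. c i \<noteq> 0}"
  have S_part_zero: "\<forall>j\<in>S. d j = 0" if "\<forall>i\<in>A. d i = 0" "(\<Sum>i\<in>A \<union> S. d i *\<^sub>R v i) = 0" for d
  proof -
    have "(\<Sum>i\<in>S. d i *\<^sub>R v i) = 0"
      using that fin disj by (simp add: sum.union_disjoint)
    then show ?thesis using indep unfolding fam_lin_dep_def by blast
  qed
  have "K \<noteq> {}"
  proof
    assume "K = {}"
    then have "\<forall>i\<in>A \<union> S. c i = 0"
      using S_part_zero[of c] Dc by (auto simp: K_def D_def)
    then show False using Dc by (simp add: D_def)
  qed
  moreover have "\<exists>t. \<forall>i\<in>A \<union> S. d i = t * c i"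
    if d_out: "\<forall>i\<in>A - K. d i = 0" and dv: "(\<Sum>i\<in>A \<union> S. d i *\<^sub>R v i) = 0" for d
  proof -
    define t where "t = (\<Sum>i\<in>A \<union> S. d i * ll i) / (\<Sum>i\<in>A \<union> S. c i * ll i)"
    define d' where "d' i = d i - t * c i" for i
    have "(\<Sum>i\<in>A \<union> S. d' i *\<^sub>R v i) = (\<Sum>i\<in>A \<union> S. d i *\<^sub>R v i) - t *\<^sub>R (\<Sum>i\<in>A \<union> S. c i *\<^sub>R v i)"
      by (simp add: d'_def scaleR_diff_left sum_subtractf scaleR_sum_right)
    then have d'v: "(\<Sum>i\<in>A \<union> S. d' i *\<^sub>R v i) = 0"
      using dv Dc by (simp add: D_def)
    have "(\<Sum>i\<in>A \<union> S. d' i * ll i) = (\<Sum>i\<in>A \<union> S. d i * ll i) - t * (\<Sum>i\<in>A \<union> S. c i * ll i)"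
      by (simp add: d'_def left_diff_distrib sum_subtractf sum_distrib_left mult.assoc)
    then have d'l: "(\<Sum>i\<in>A \<union> S. d' i * ll i) = 0"
      using Dc by (simp add: D_def t_def)
    have d'_out: "\<forall>i\<in>A - K. d' i = 0"
      using d_out by (simp add: d'_def K_def)
    have "\<forall>i\<in>K. d' i = 0"
    proof (rule ccontr)
      assume "\<not> (\<forall>i\<in>K. d' i = 0)"
      then have d'_ne: "\<exists>i\<in>K. d' i \<noteq> 0" by blast
      have c_nonneg: "\<forall>i\<in>A. c i \<ge> 0" using Dc by (simp add: D_def)
      obtain c' where c': "\<And>i. i \<in> A \<Longrightarrow> c' i \<ge> 0" "{i\<in>A. c' i \<noteq> 0} \<subset> K"
        "(\<Sum>i\<in>A \<union> S. c' i *\<^sub>R v i) = (\<Sum>i\<in>A \<union> S. c i *\<^sub>R v i)"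
        "(\<Sum>i\<in>A \<union> S. c' i * ll i) = (\<Sum>i\<in>A \<union> S. c i * ll i)"
        by (rule ratio_test_shrinks_support[OF fin(1) K_def c_nonneg d'_out d'_ne d'v d'l]) (rule that)
      have "\<forall>i\<in>A. c' i \<ge> 0 \<and> (c' i \<noteq> 0 \<longrightarrow> Q i)"
        using c'(1,2) Dc unfolding D_def K_def by blast
      then have "D c'" using c'(3,4) Dc by (simp add: D_def)
      moreover have "card {i\<in>A. c' i \<noteq> 0} < card K"
        using c'(2) fin(1) by (intro psubset_card_mono) (auto simp: K_def)
      ultimately show False using min[of c'] by (simp add: K_def)
    qed
    then have "\<forall>i\<in>A \<union> S. d' i = 0"
      using S_part_zero[of d'] d'_out d'v by auto
    then show ?thesis by (auto simp: d'_def)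
  qed
  moreover have "K \<subseteq> A" "\<And>i. i \<in> K \<Longrightarrow> c i > 0 \<and> Q i" "\<And>i. i \<in> A - K \<Longrightarrow> c i = 0"
    using Dc unfolding K_def D_def by force+
  ultimately show ?thesis
    using that[of K c] Dc unfolding D_def by blast
qed

section \<open>A penalty argument for converging constraint systems\<close>

text \<open>Fermat's rule for \<open>y \<mapsto> \<parallel>r y\<parallel> + \<parallel>y - c\<parallel>\<^sup>2\<close> at a minimiser where the residual \<open>r\<close> is nonzero.\<close>
lemma sqrt_penalty_stationary:
  fixes r :: "'i \<Rightarrow> 'a::real_inner \<Rightarrow> real" and G :: "'i \<Rightarrow> 'a"
  assumes fin: "finite I"
    and deriv: "\<And>i. i \<in> I \<Longrightarrow> ((\<lambda>y. (r i y)\<^sup>2) has_derivative (\<lambda>v. 2 * r i w * (G i \<bullet> v))) (at w)"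
    and pos: "(\<Sum>i\<in>I. (r i w)\<^sup>2) > 0"
    and min: "\<And>y. sqrt (\<Sum>i\<in>I. (r i w)\<^sup>2) + (w - c) \<bullet> (w - c) \<le> sqrt (\<Sum>i\<in>I. (r i y)\<^sup>2) + (y - c) \<bullet> (y - c)"
  shows "(\<Sum>i\<in>I. (r i w / sqrt (\<Sum>i\<in>I. (r i w)\<^sup>2)) *\<^sub>R G i) = - (2 *\<^sub>R (w - c))"
proof -
  define P where "P y = (\<Sum>i\<in>I. (r i y)\<^sup>2)" for y
  define u where "u = (\<Sum>i\<in>I. (r i w / sqrt (P w)) *\<^sub>R G i)"
  have "(P has_derivative (\<lambda>v. \<Sum>i\<in>I. 2 * r i w * (G i \<bullet> v))) (at w)"
    unfolding P_def by (intro has_derivative_sum deriv)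
  moreover have "(sqrt has_derivative (*) (inverse (sqrt (P w)) / 2)) (at (P w))"
    using DERIV_real_sqrt[of "P w"] pos unfolding has_field_derivative_def P_def by simp
  ultimately have "((\<lambda>y. sqrt (P y)) has_derivative
      (\<lambda>v. inverse (sqrt (P w)) / 2 * (\<Sum>i\<in>I. 2 * r i w * (G i \<bullet> v)))) (at w)"
    by (rule has_derivative_compose)
  moreover have "inverse (sqrt (P w)) / 2 * (\<Sum>i\<in>I. 2 * r i w * (G i \<bullet> v)) = u \<bullet> v" for v
    by (simp add: u_def inner_sum_left sum_distrib_left field_simps)
  ultimately have "((\<lambda>y. sqrt (P y)) has_derivative (\<lambda>v. u \<bullet> v)) (at w)" by simp
  moreover have "((\<lambda>y. (y - c) \<bullet> (y - c)) has_derivative (\<lambda>v. (w - c) \<bullet> v + v \<bullet> (w - c))) (at w)"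
    by (auto intro!: derivative_eq_intros)
  ultimately have deriv_sum: "((\<lambda>y. sqrt (P y) + (y - c) \<bullet> (y - c)) has_derivative
      (\<lambda>v. u \<bullet> v + ((w - c) \<bullet> v + v \<bullet> (w - c)))) (at w)"
    by (rule has_derivative_add)
  have "(\<lambda>v. u \<bullet> v + ((w - c) \<bullet> v + v \<bullet> (w - c))) = (\<lambda>v. 0)"
    by (rule differential_zero_maxmin[OF _ open_UNIV deriv_sum]) (use min in \<open>auto simp: P_def\<close>)
  then have "(u + 2 *\<^sub>R (w - c)) \<bullet> v = 0" for v
    by (drule_tac fun_cong[of _ _ v]) (simp add: inner_add_left inner_commute[of v])
  then have "u + 2 *\<^sub>R (w - c) = 0"
    by (metis inner_eq_zero_iff)
  then show ?thesis
    by (simp add: u_def P_def eq_neg_iff_add_eq_0)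
qed

text \<open>The lower-level constraint systems \<open>val k i\<close> at parameters \<open>x\<^sub>k \<rightarrow> x\<close>, seen abstractly:
  \<open>A\<close> indexes the inequality and \<open>J\<close> the equality constraints, \<open>S \<subseteq> J\<close> is the basis from RCPLD,
  \<open>Act\<close> the inequalities active at \<open>yb\<close>, and \<open>Gs\<close> the gradients at the limit point.\<close>
locale perturbed_constraints =
  fixes A J S Act :: "'i set"
    and val :: "nat \<Rightarrow> 'i \<Rightarrow> 'a::euclidean_space \<Rightarrow> real"
    and G :: "nat \<Rightarrow> 'i \<Rightarrow> 'a \<Rightarrow> 'a"
    and Gs :: "'i \<Rightarrow> 'a" and yb :: 'a
  assumes finite_A: "finite A" and finite_J: "finite J" and disjoint: "A \<inter> J = {}"
    and S_subset: "S \<subseteq> J" and Act_subset: "Act \<subseteq> A"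
    and has_derivative_val: "\<And>k i y. i \<in> A \<union> J \<Longrightarrow> (val k i has_derivative (\<lambda>v. G k i y \<bullet> v)) (at y)"
    and convex_val: "\<And>k i. i \<in> A \<Longrightarrow> convex_on UNIV (val k i)"
    and affine_val: "\<And>k j y z. j \<in> J \<Longrightarrow> val k j y - val k j z = G k j y \<bullet> (y - z)"
    and feasible_point: "\<And>k. \<exists>u. (\<forall>i\<in>A. val k i u \<le> 0) \<and> (\<forall>j\<in>J. val k j u = 0)"
    and ineq_limsup: "\<And>i e. i \<in> A \<Longrightarrow> e > 0 \<Longrightarrow> eventually (\<lambda>k. val k i yb < e) sequentially"
    and eq_tendsto: "\<And>j. j \<in> J \<Longrightarrow> (\<lambda>k. val k j yb) \<longlonglongrightarrow> 0"
    and grad_tendsto: "\<And>i ys. i \<in> A \<union> J \<Longrightarrow> ys \<longlonglongrightarrow> yb \<Longrightarrow> (\<lambda>k. G k i (ys k)) \<longlonglongrightarrow> Gs i"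
    and inactive: "\<And>i ys. i \<in> A - Act \<Longrightarrow> ys \<longlonglongrightarrow> yb \<Longrightarrow> eventually (\<lambda>k. val k i (ys k) < 0) sequentially"
    and indep_S: "\<not> fam_lin_dep S Gs"
    and span_S: "\<And>ys. ys \<longlonglongrightarrow> yb \<Longrightarrow>
      eventually (\<lambda>k. span ((\<lambda>j. G k j (ys k)) ` J) \<subseteq> span ((\<lambda>j. G k j (ys k)) ` S)) sequentially"
    and rcpld: "\<And>K ys. K \<subseteq> Act \<Longrightarrow> pos_lin_dep K S Gs \<Longrightarrow> ys \<longlonglongrightarrow> yb \<Longrightarrow>
      eventually (\<lambda>k. fam_lin_dep (K \<union> S) (\<lambda>i. G k i (ys k))) sequentially"
begin

definition feasible :: "nat \<Rightarrow> 'a \<Rightarrow> bool" where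
  "feasible k y \<longleftrightarrow> (\<forall>i\<in>A. val k i y \<le> 0) \<and> (\<forall>j\<in>J. val k j y = 0)"

definition residual :: "nat \<Rightarrow> 'i \<Rightarrow> 'a \<Rightarrow> real" where
  "residual k i y = (if i \<in> A then max (val k i y) 0 else val k i y)"

definition violation :: "nat \<Rightarrow> 'a \<Rightarrow> real" where
  "violation k y = sqrt (\<Sum>i\<in>A \<union> J. (residual k i y)\<^sup>2)"

definition penalized :: "nat \<Rightarrow> 'a \<Rightarrow> real" where
  "penalized k y = violation k y + (y - yb) \<bullet> (y - yb)"

definition minimizer :: "nat \<Rightarrow> 'a" where
  "minimizer k = (SOME w. \<forall>y. penalized k w \<le> penalized k y)"

definition multiplier :: "nat \<Rightarrow> 'i \<Rightarrow> real" where
  "multiplier k i = residual k i (minimizer k) / violation k (minimizer k)"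

lemma finite_S: "finite S"
  using finite_subset[OF S_subset finite_J] .

lemma disjoint_S: "A \<inter> S = {}"
  using disjoint S_subset by blast

lemma violation_nonneg: "violation k y \<ge> 0"
  by (simp add: violation_def sum_nonneg)

lemma abs_residual_le_violation:
  assumes "i \<in> A \<union> J"
  shows "\<bar>residual k i y\<bar> \<le> violation k y"
proof -
  have "(residual k i y)\<^sup>2 \<le> (\<Sum>i\<in>A \<union> J. (residual k i y)\<^sup>2)"
    using assms finite_A finite_J by (intro member_le_sum) auto
  then have "sqrt ((residual k i y)\<^sup>2) \<le> violation k y"
    unfolding violation_def by (rule real_sqrt_le_mono)
  then show ?thesis by simp
qed

lemma feasible_if_violation_eq_0:
  assumes "violation k y = 0"
  shows "feasible k y"
proof -
  have "(\<Sum>i\<in>A \<union> J. (residual k i y)\<^sup>2) = 0"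
    using assms sum_nonneg[of "A \<union> J" "\<lambda>i. (residual k i y)\<^sup>2"] by (simp add: violation_def)
  then have zero: "residual k i y = 0" if "i \<in> A \<union> J" for i
    using that finite_A finite_J by (simp add: sum_nonneg_eq_0_iff)
  show ?thesis
    unfolding feasible_def
  proof (intro conjI ballI)
    fix i assume "i \<in> A"
    then show "val k i y \<le> 0" using zero[of i] by (simp add: residual_def)
  next
    fix j assume "j \<in> J"
    moreover have "j \<notin> A" using \<open>j \<in> J\<close> disjoint by blast
    ultimately show "val k j y = 0" using zero[of j] by (simp add: residual_def)
  qed
qed

lemma violation_at_yb_tendsto_0: "(\<lambda>k. violation k yb) \<longlonglongrightarrow> 0"
proof -
  have "(\<lambda>k. residual k i yb) \<longlonglongrightarrow> 0" if "i \<in> A \<union> J" for i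
  proof (cases "i \<in> A")
    case True
    have "eventually (\<lambda>k. dist (max (val k i yb) 0) 0 < e) sequentially" if "e > 0" for e
      using ineq_limsup[OF True that] by eventually_elim (use that in auto)
    then show ?thesis using True by (simp add: residual_def tendsto_iff)
  next
    case False
    then show ?thesis using that eq_tendsto by (simp add: residual_def)
  qed
  then have "(\<lambda>k. \<Sum>i\<in>A \<union> J. (residual k i yb)\<^sup>2) \<longlonglongrightarrow> (\<Sum>i\<in>A \<union> J. 0\<^sup>2)"
    by (intro tendsto_intros) auto
  from tendsto_real_sqrt[OF this] show ?thesis
    by (simp add: violation_def)
qed

lemma continuous_on_residual:
  assumes "i \<in> A \<union> J"
  shows "continuous_on UNIV (residual k i)"
proof -
  have "continuous_on UNIV (val k i)"
    using has_derivative_val[OF assms]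
    by (intro continuous_at_imp_continuous_on ballI has_derivative_continuous) blast
  then show ?thesis
    by (cases "i \<in> A") (auto simp: residual_def intro!: continuous_intros)
qed

lemma penalized_has_min: "\<exists>w. \<forall>y. penalized k w \<le> penalized k y"
proof -
  define R where "R = sqrt (violation k yb)"
  have "continuous_on UNIV (penalized k)"
    unfolding penalized_def violation_def
    by (intro continuous_intros continuous_on_residual) auto
  then have "continuous_on (cball yb R) (penalized k)"
    by (rule continuous_on_subset) simp
  moreover have "compact (cball yb R)" "cball yb R \<noteq> {}"
    using violation_nonneg[of k yb] by (auto simp: R_def)
  ultimately obtain w where w: "w \<in> cball yb R" "\<forall>y\<in>cball yb R. penalized k w \<le> penalized k y"
    using continuous_attains_inf by blast
  have "penalized k w \<le> penalized k y" for y
  proof (cases "y \<in> cball yb R")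
    case False
    then have "R\<^sup>2 < (norm (y - yb))\<^sup>2"
      using violation_nonneg[of k yb]
      by (intro power_strict_mono) (auto simp: R_def dist_norm norm_minus_commute)
    then have "penalized k yb < penalized k y"
      using violation_nonneg[of k y] violation_nonneg[of k yb]
      by (simp add: penalized_def R_def power2_norm_eq_inner)
    moreover have "penalized k w \<le> penalized k yb"
      using w(2) violation_nonneg[of k yb] by (simp add: R_def)
    ultimately show ?thesis by simp
  qed (use w in blast)
  then show ?thesis by blast
qed

lemma minimizer_le: "penalized k (minimizer k) \<le> penalized k y"
  using someI_ex[OF penalized_has_min[of k]] by (simp add: minimizer_def)

lemma minimizer_tendsto: "minimizer \<longlonglongrightarrow> yb"
proof -
  have "(norm (minimizer k - yb))\<^sup>2 \<le> violation k yb" for k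
    using minimizer_le[of k yb] violation_nonneg[of k "minimizer k"]
    by (simp add: penalized_def power2_norm_eq_inner)
  then have bound: "\<forall>k. norm (minimizer k - yb) \<le> sqrt (violation k yb)"
    by (simp add: real_le_rsqrt)
  have "(\<lambda>k. sqrt (violation k yb)) \<longlonglongrightarrow> 0"
    using tendsto_real_sqrt[OF violation_at_yb_tendsto_0] by simp
  then have "(\<lambda>k. minimizer k - yb) \<longlonglongrightarrow> 0"
    by (rule Lim_null_comparison[OF always_eventually[OF bound]])
  then show ?thesis by (simp add: LIM_zero_iff)
qed

lemma residual_square_has_derivative:
  assumes "i \<in> A \<union> J"
  shows "((\<lambda>y. (residual k i y)\<^sup>2) has_derivative (\<lambda>v. 2 * residual k i w * (G k i w \<bullet> v))) (at w)"
proof (cases "i \<in> A")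
  case True
  have "((\<lambda>t. (max t 0)\<^sup>2) has_derivative (*) (2 * max (val k i w) 0)) (at (val k i w))"
    using has_real_derivative_pos_part_square unfolding has_field_derivative_def .
  from has_derivative_compose[OF has_derivative_val[OF assms] this] show ?thesis
    using True by (simp add: residual_def)
next
  case False
  have "((\<lambda>t. t\<^sup>2) has_real_derivative 2 * val k i w) (at (val k i w))"
    by (auto intro!: derivative_eq_intros)
  then have "((\<lambda>t. t\<^sup>2) has_derivative (*) (2 * val k i w)) (at (val k i w))"
    unfolding has_field_derivative_def .
  from has_derivative_compose[OF has_derivative_val[OF assms] this] show ?thesis
    using False by (simp add: residual_def)
qed

lemma multiplier_stationary:
  assumes pos: "violation k (minimizer k) > 0"
  shows "(\<Sum>i\<in>A \<union> J. multiplier k i *\<^sub>R G k i (minimizer k)) = - (2 *\<^sub>R (minimizer k - yb))"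
proof -
  let ?w = "minimizer k"
  have "(\<Sum>i\<in>A \<union> J. (residual k i ?w / sqrt (\<Sum>i\<in>A \<union> J. (residual k i ?w)\<^sup>2)) *\<^sub>R G k i ?w)
      = - (2 *\<^sub>R (?w - yb))"
  proof (rule sqrt_penalty_stationary)
    show "finite (A \<union> J)" using finite_A finite_J by simp
    show "((\<lambda>y. (residual k i y)\<^sup>2) has_derivative (\<lambda>v. 2 * residual k i ?w * (G k i ?w \<bullet> v))) (at ?w)"
      if "i \<in> A \<union> J" for i
      using that by (rule residual_square_has_derivative)
    show "(\<Sum>i\<in>A \<union> J. (residual k i ?w)\<^sup>2) > 0"
      using pos by (simp add: violation_def)
    show "sqrt (\<Sum>i\<in>A \<union> J. (residual k i ?w)\<^sup>2) + (?w - yb) \<bullet> (?w - yb)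
        \<le> sqrt (\<Sum>i\<in>A \<union> J. (residual k i y)\<^sup>2) + (y - yb) \<bullet> (y - yb)" for y
      using minimizer_le[of k y] by (simp add: penalized_def violation_def)
  qed
  then show ?thesis by (simp add: multiplier_def violation_def)
qed

lemma sum_multiplier_square:
  assumes pos: "violation k (minimizer k) > 0"
  shows "(\<Sum>i\<in>A \<union> J. (multiplier k i)\<^sup>2) = 1"
proof -
  have "(violation k (minimizer k))\<^sup>2 = (\<Sum>i\<in>A \<union> J. (residual k i (minimizer k))\<^sup>2)"
    by (simp add: violation_def sum_nonneg)
  moreover have "(violation k (minimizer k))\<^sup>2 > 0" using pos by simp
  moreover have "(\<Sum>i\<in>A \<union> J. (multiplier k i)\<^sup>2)
      = (\<Sum>i\<in>A \<union> J. (residual k i (minimizer k))\<^sup>2) / (violation k (minimizer k))\<^sup>2"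
    by (simp add: multiplier_def power_divide sum_divide_distrib)
  ultimately show ?thesis by simp
qed

lemma multiplier_nonneg: "i \<in> A \<Longrightarrow> multiplier k i \<ge> 0"
  by (simp add: multiplier_def residual_def violation_nonneg)

lemma abs_multiplier_le_1: "i \<in> A \<union> J \<Longrightarrow> \<bar>multiplier k i\<bar> \<le> 1"
  using abs_residual_le_violation[of i k "minimizer k"] violation_nonneg[of k "minimizer k"]
  by (cases "violation k (minimizer k) = 0") (simp_all add: multiplier_def abs_divide)

lemma residual_equality:
  assumes "j \<in> J" and "feasible k u"
  shows "residual k j y = G k j y \<bullet> (y - u)"
proof -
  have "j \<notin> A" using assms(1) disjoint by blast
  then show ?thesis
    using affine_val[OF assms(1), of k y u] assms by (simp add: residual_def feasible_def)
qed

text \<open>Near \<open>yb\<close> the equality gradients indexed by \<open>S\<close> span those indexed by \<open>J\<close>, so the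
  equality multipliers can be replaced by coefficients \<open>\<nu>\<close> on \<open>S\<close>.\<close>
lemma reduced_multipliers:
  assumes pos: "violation k (minimizer k) > 0"
    and span: "span ((\<lambda>j. G k j (minimizer k)) ` J) \<subseteq> span ((\<lambda>j. G k j (minimizer k)) ` S)"
  obtains \<nu> where
    "(\<Sum>i\<in>A. multiplier k i *\<^sub>R G k i (minimizer k)) + (\<Sum>j\<in>S. \<nu> j *\<^sub>R G k j (minimizer k))
      = - (2 *\<^sub>R (minimizer k - yb))"
    "(\<Sum>i\<in>A. (multiplier k i)\<^sup>2) + (\<Sum>j\<in>S. \<nu> j * multiplier k j) = 1"
proof -
  define w where "w = minimizer k"
  define V where "V = violation k w"
  define g where "g j = G k j w" for j
  define z where "z = (\<Sum>j\<in>J. multiplier k j *\<^sub>R g j)"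
  have "z \<in> span (g ` J)"
    unfolding z_def by (intro span_sum span_scale span_base) auto
  then have "z \<in> span (g ` S)" using span by (auto simp: g_def w_def)
  then obtain \<nu> where \<nu>: "z = (\<Sum>j\<in>S. \<nu> j *\<^sub>R g j)"
    using span_image_finite_sum[OF finite_S] by blast
  obtain u where u: "feasible k u"
    using feasible_point[of k] unfolding feasible_def by blast
  have V: "V > 0" using pos by (simp add: V_def w_def)
  have mult_eq: "multiplier k j * V = g j \<bullet> (w - u)" if "j \<in> J" for j
    using residual_equality[OF that u] V by (simp add: multiplier_def V_def g_def w_def)
  have split: "(\<Sum>i\<in>A \<union> J. f i) = (\<Sum>i\<in>A. f i) + (\<Sum>i\<in>J. f i)" for f :: "'i \<Rightarrow> 'b::comm_monoid_add"
    using finite_A finite_J disjoint by (simp add: sum.union_disjoint)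
  have "(\<Sum>j\<in>J. (multiplier k j)\<^sup>2) = (\<Sum>j\<in>J. multiplier k j * (multiplier k j * V)) / V"
    using V by (simp add: sum_divide_distrib power2_eq_square)
  also have "\<dots> = (z \<bullet> (w - u)) / V"
    by (simp add: z_def inner_sum_left mult_eq)
  also have "\<dots> = (\<Sum>j\<in>S. \<nu> j * (multiplier k j * V)) / V"
    using S_subset by (auto simp: \<nu> inner_sum_left mult_eq intro!: sum.cong arg_cong[where f="\<lambda>x. x / V"])
  also have "\<dots> = (\<Sum>j\<in>S. \<nu> j * multiplier k j)"
    using V by (simp add: sum_divide_distrib)
  finally have "(\<Sum>i\<in>A. (multiplier k i)\<^sup>2) + (\<Sum>j\<in>S. \<nu> j * multiplier k j) = 1"
    using sum_multiplier_square[OF pos] split[of "\<lambda>i. (multiplier k i)\<^sup>2"] by simp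
  moreover have "(\<Sum>i\<in>A. multiplier k i *\<^sub>R g i) + (\<Sum>j\<in>S. \<nu> j *\<^sub>R g j) = - (2 *\<^sub>R (w - yb))"
    using multiplier_stationary[OF pos] split[of "\<lambda>i. multiplier k i *\<^sub>R g i"] \<nu>
    by (simp add: z_def g_def w_def)
  ultimately show ?thesis
    using that by (simp add: g_def w_def)
qed

lemma normalized_multipliers:
  assumes "violation k (minimizer k) > 0"
    and "span ((\<lambda>j. G k j (minimizer k)) ` J) \<subseteq> span ((\<lambda>j. G k j (minimizer k)) ` S)"
  obtains \<theta> \<nu> where "\<theta> > 0" "\<theta> + (\<Sum>j\<in>S. \<bar>\<nu> j\<bar>) = 1"
    "\<theta> *\<^sub>R (\<Sum>i\<in>A. multiplier k i *\<^sub>R G k i (minimizer k)) + (\<Sum>j\<in>S. \<nu> j *\<^sub>R G k j (minimizer k))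
      = - (2 * \<theta>) *\<^sub>R (minimizer k - yb)"
    "\<theta> * (\<Sum>i\<in>A. (multiplier k i)\<^sup>2) + (\<Sum>j\<in>S. \<nu> j * multiplier k j) = \<theta>"
proof -
  obtain \<nu> where \<nu>:
    "(\<Sum>i\<in>A. multiplier k i *\<^sub>R G k i (minimizer k)) + (\<Sum>j\<in>S. \<nu> j *\<^sub>R G k j (minimizer k))
      = - (2 *\<^sub>R (minimizer k - yb))"
    "(\<Sum>i\<in>A. (multiplier k i)\<^sup>2) + (\<Sum>j\<in>S. \<nu> j * multiplier k j) = 1"
    using reduced_multipliers[OF assms] by blast
  define \<theta> where "\<theta> = 1 / (1 + (\<Sum>j\<in>S. \<bar>\<nu> j\<bar>))"
  have N: "1 + (\<Sum>j\<in>S. \<bar>\<nu> j\<bar>) > 0" by (simp add: add_pos_nonneg sum_nonneg)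
  show ?thesis
  proof (rule that[of \<theta> "\<lambda>j. \<theta> * \<nu> j"])
    show "\<theta> > 0" using N by (simp add: \<theta>_def)
    have "(\<Sum>j\<in>S. \<bar>\<theta> * \<nu> j\<bar>) = \<theta> * (\<Sum>j\<in>S. \<bar>\<nu> j\<bar>)"
      using N by (simp add: \<theta>_def abs_mult sum_distrib_left)
    then show "\<theta> + (\<Sum>j\<in>S. \<bar>\<theta> * \<nu> j\<bar>) = 1"
      using N by (simp add: \<theta>_def field_simps)
    show "\<theta> *\<^sub>R (\<Sum>i\<in>A. multiplier k i *\<^sub>R G k i (minimizer k)) + (\<Sum>j\<in>S. (\<theta> * \<nu> j) *\<^sub>R G k j (minimizer k))
      = - (2 * \<theta>) *\<^sub>R (minimizer k - yb)"
      using arg_cong[OF \<nu>(1), of "scaleR \<theta>"] by (simp add: scaleR_add_right scaleR_sum_right)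
    show "\<theta> * (\<Sum>i\<in>A. (multiplier k i)\<^sup>2) + (\<Sum>j\<in>S. \<theta> * \<nu> j * multiplier k j) = \<theta>"
      using arg_cong[OF \<nu>(2), of "(*) \<theta>"] by (simp add: distrib_left sum_distrib_left mult.assoc)
  qed
qed

lemma normalized_multiplier_sequences:
  assumes pos: "eventually (\<lambda>k. violation k (minimizer k) > 0) sequentially"
  obtains \<theta> \<nu> where "\<And>k. \<theta> k > 0" "\<And>k. \<theta> k + (\<Sum>j\<in>S. \<bar>\<nu> k j\<bar>) = 1"
    "eventually (\<lambda>k. \<theta> k *\<^sub>R (\<Sum>i\<in>A. multiplier k i *\<^sub>R G k i (minimizer k))
        + (\<Sum>j\<in>S. \<nu> k j *\<^sub>R G k j (minimizer k)) = - (2 * \<theta> k) *\<^sub>R (minimizer k - yb)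
      \<and> \<theta> k * (\<Sum>i\<in>A. (multiplier k i)\<^sup>2) + (\<Sum>j\<in>S. \<nu> k j * multiplier k j) = \<theta> k) sequentially"
proof -
  define good where "good k \<longleftrightarrow> violation k (minimizer k) > 0
    \<and> span ((\<lambda>j. G k j (minimizer k)) ` J) \<subseteq> span ((\<lambda>j. G k j (minimizer k)) ` S)" for k
  define ids where "ids k \<theta> \<nu> \<longleftrightarrow> \<theta> *\<^sub>R (\<Sum>i\<in>A. multiplier k i *\<^sub>R G k i (minimizer k))
      + (\<Sum>j\<in>S. \<nu> j *\<^sub>R G k j (minimizer k)) = - (2 * \<theta>) *\<^sub>R (minimizer k - yb)
    \<and> \<theta> * (\<Sum>i\<in>A. (multiplier k i)\<^sup>2) + (\<Sum>j\<in>S. \<nu> j * multiplier k j) = \<theta>" for k \<theta> \<nu>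
  have "\<exists>\<theta> \<nu>. \<theta> > 0 \<and> \<theta> + (\<Sum>j\<in>S. \<bar>\<nu> j\<bar>) = 1 \<and> (good k \<longrightarrow> ids k \<theta> \<nu>)" for k
  proof (cases "good k")
    case True
    then have "violation k (minimizer k) > 0"
      "span ((\<lambda>j. G k j (minimizer k)) ` J) \<subseteq> span ((\<lambda>j. G k j (minimizer k)) ` S)"
      by (simp_all add: good_def)
    then obtain \<theta> \<nu> where "\<theta> > 0" "\<theta> + (\<Sum>j\<in>S. \<bar>\<nu> j\<bar>) = 1" "ids k \<theta> \<nu>"
      by (rule normalized_multipliers) (rule that; simp add: ids_def)
    then show ?thesis by blast
  next
    case False
    then show ?thesis by (intro exI[of _ 1] exI[of _ "\<lambda>_. 0"]) simp
  qed
  then obtain \<theta> where "\<forall>k. \<exists>\<nu>. \<theta> k > 0 \<and> \<theta> k + (\<Sum>j\<in>S. \<bar>\<nu> j\<bar>) = 1 \<and> (good k \<longrightarrow> ids k (\<theta> k) \<nu>)"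
    by (metis choice)
  then obtain \<nu> where \<theta>\<nu>: "\<forall>k. \<theta> k > 0 \<and> \<theta> k + (\<Sum>j\<in>S. \<bar>\<nu> k j\<bar>) = 1 \<and> (good k \<longrightarrow> ids k (\<theta> k) (\<nu> k))"
    by (metis choice)
  have "eventually good sequentially"
    using pos span_S[OF minimizer_tendsto] unfolding good_def by (rule eventually_conj)
  then have "eventually (\<lambda>k. ids k (\<theta> k) (\<nu> k)) sequentially"
    by (rule eventually_mono) (use \<theta>\<nu> in blast)
  then show ?thesis
    using that[of \<theta> \<nu>] \<theta>\<nu> unfolding ids_def by blast
qed

lemma limit_normalized_multipliers:
  assumes pos: "eventually (\<lambda>k. violation k (minimizer k) > 0) sequentially"
  obtains r ll nh \<theta>l where "strict_mono r" "\<And>i. i \<in> A \<union> S \<Longrightarrow> (\<lambda>k. multiplier (r k) i) \<longlonglongrightarrow> ll i"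
    "\<theta>l > 0" "\<theta>l *\<^sub>R (\<Sum>i\<in>A. ll i *\<^sub>R Gs i) + (\<Sum>j\<in>S. nh j *\<^sub>R Gs j) = 0"
    "\<theta>l * (\<Sum>i\<in>A. (ll i)\<^sup>2) + (\<Sum>j\<in>S. nh j * ll j) = \<theta>l"
proof -
  obtain \<theta> \<nu> where \<theta>: "\<And>k. \<theta> k > 0" and \<theta>\<nu>: "\<And>k. \<theta> k + (\<Sum>j\<in>S. \<bar>\<nu> k j\<bar>) = 1"
    and ids: "eventually (\<lambda>k. \<theta> k *\<^sub>R (\<Sum>i\<in>A. multiplier k i *\<^sub>R G k i (minimizer k))
        + (\<Sum>j\<in>S. \<nu> k j *\<^sub>R G k j (minimizer k)) = - (2 * \<theta> k) *\<^sub>R (minimizer k - yb)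
      \<and> \<theta> k * (\<Sum>i\<in>A. (multiplier k i)\<^sup>2) + (\<Sum>j\<in>S. \<nu> k j * multiplier k j) = \<theta> k) sequentially"
    by (rule normalized_multiplier_sequences[OF pos]) (rule that)
  have "\<bar>case_sum (multiplier k) (\<nu> k) p\<bar> \<le> 1" if "p \<in> (A \<union> S) <+> S" for k p
  proof -
    have "\<bar>\<nu> k j\<bar> \<le> 1" if "j \<in> S" for j
      using member_le_sum[of j S "\<lambda>j. \<bar>\<nu> k j\<bar>"] finite_S that \<theta>[of k] \<theta>\<nu>[of k] by simp
    then show ?thesis
      using that abs_multiplier_le_1 S_subset by auto
  qed
  then obtain r L where r: "strict_mono r"
    and L: "\<forall>p\<in>(A \<union> S) <+> S. (\<lambda>k. case_sum (multiplier (r k)) (\<nu> (r k)) p) \<longlonglongrightarrow> L p"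
    using finite_family_convergent_subseq[of "(A \<union> S) <+> S" "\<lambda>k. case_sum (multiplier k) (\<nu> k)" 1]
      finite_A finite_S by (meson finite_Plus finite_UnI)
  define ll where "ll i = L (Inl i)" for i
  define nh where "nh j = L (Inr j)" for j
  define \<theta>l where "\<theta>l = 1 - (\<Sum>j\<in>S. \<bar>nh j\<bar>)"
  have lim_ll: "(\<lambda>k. multiplier (r k) i) \<longlonglongrightarrow> ll i" if "i \<in> A \<union> S" for i
    using L that by (force simp: ll_def)
  have lim_nh: "(\<lambda>k. \<nu> (r k) j) \<longlonglongrightarrow> nh j" if "j \<in> S" for j
    using L that by (force simp: nh_def)
  have lim_\<theta>: "(\<lambda>k. \<theta> (r k)) \<longlonglongrightarrow> \<theta>l"
  proof -
    have "(\<lambda>k. 1 - (\<Sum>j\<in>S. \<bar>\<nu> (r k) j\<bar>)) \<longlonglongrightarrow> \<theta>l"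
      unfolding \<theta>l_def by (intro tendsto_intros lim_nh)
    moreover have "\<theta> k = 1 - (\<Sum>j\<in>S. \<bar>\<nu> k j\<bar>)" for k using \<theta>\<nu>[of k] by simp
    ultimately show ?thesis by simp
  qed
  have lim_G: "(\<lambda>k. G (r k) i (minimizer (r k))) \<longlonglongrightarrow> Gs i" if "i \<in> A \<union> J" for i
    using LIMSEQ_subseq_LIMSEQ[OF grad_tendsto[OF that minimizer_tendsto] r] by (simp add: o_def)
  note ids_r = eventually_subseq[OF r ids]
  have lim_w: "(\<lambda>k. minimizer (r k)) \<longlonglongrightarrow> yb"
    using LIMSEQ_subseq_LIMSEQ[OF minimizer_tendsto r] by (simp add: o_def)
  have "\<theta>l *\<^sub>R (\<Sum>i\<in>A. ll i *\<^sub>R Gs i) + (\<Sum>j\<in>S. nh j *\<^sub>R Gs j) = - (2 * \<theta>l) *\<^sub>R (yb - yb)"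
  proof (rule LIMSEQ_eventually_eq_unique)
    show "(\<lambda>k. \<theta> (r k) *\<^sub>R (\<Sum>i\<in>A. multiplier (r k) i *\<^sub>R G (r k) i (minimizer (r k)))
        + (\<Sum>j\<in>S. \<nu> (r k) j *\<^sub>R G (r k) j (minimizer (r k))))
        \<longlonglongrightarrow> \<theta>l *\<^sub>R (\<Sum>i\<in>A. ll i *\<^sub>R Gs i) + (\<Sum>j\<in>S. nh j *\<^sub>R Gs j)"
      using S_subset by (intro tendsto_intros lim_\<theta> lim_ll lim_nh lim_G) auto
    show "(\<lambda>k. - (2 * \<theta> (r k)) *\<^sub>R (minimizer (r k) - yb)) \<longlonglongrightarrow> - (2 * \<theta>l) *\<^sub>R (yb - yb)"
      by (intro tendsto_intros lim_\<theta> lim_w)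
  qed (use ids_r in \<open>auto elim: eventually_mono\<close>)
  then have lim1: "\<theta>l *\<^sub>R (\<Sum>i\<in>A. ll i *\<^sub>R Gs i) + (\<Sum>j\<in>S. nh j *\<^sub>R Gs j) = 0" by simp
  have lim2: "\<theta>l * (\<Sum>i\<in>A. (ll i)\<^sup>2) + (\<Sum>j\<in>S. nh j * ll j) = \<theta>l"
  proof (rule LIMSEQ_eventually_eq_unique[OF _ lim_\<theta>])
    show "(\<lambda>k. \<theta> (r k) * (\<Sum>i\<in>A. (multiplier (r k) i)\<^sup>2) + (\<Sum>j\<in>S. \<nu> (r k) j * multiplier (r k) j))
        \<longlonglongrightarrow> \<theta>l * (\<Sum>i\<in>A. (ll i)\<^sup>2) + (\<Sum>j\<in>S. nh j * ll j)"
      by (intro tendsto_intros lim_\<theta> lim_ll lim_nh) auto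
  qed (use ids_r in \<open>auto elim: eventually_mono\<close>)
  have "\<theta>l \<ge> 0"
    using lim_\<theta> by (rule tendsto_lowerbound) (simp_all add: less_imp_le \<theta>)
  moreover have "\<theta>l \<noteq> 0"
  proof
    assume "\<theta>l = 0"
    then have "(\<Sum>j\<in>S. \<bar>nh j\<bar>) = 1" "(\<Sum>j\<in>S. nh j *\<^sub>R Gs j) = 0"
      using lim1 by (simp_all add: \<theta>l_def)
    moreover have "\<exists>j\<in>S. nh j \<noteq> 0"
    proof (rule ccontr)
      assume "\<not> (\<exists>j\<in>S. nh j \<noteq> 0)"
      then have "(\<Sum>j\<in>S. \<bar>nh j\<bar>) = 0" by simp
      with \<open>(\<Sum>j\<in>S. \<bar>nh j\<bar>) = 1\<close> show False by simp
    qed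
    ultimately have "fam_lin_dep S Gs"
      unfolding fam_lin_dep_def by blast
    with indep_S show False ..
  qed
  ultimately show ?thesis
    using that[OF r lim_ll _ lim1 lim2] by simp
qed

lemma limit_positive_dependence:
  assumes "eventually (\<lambda>k. violation k (minimizer k) > 0) sequentially"
  obtains r ll c where "strict_mono r" "\<And>i. i \<in> A \<union> S \<Longrightarrow> (\<lambda>k. multiplier (r k) i) \<longlonglongrightarrow> ll i"
    "\<forall>i\<in>A. c i \<ge> 0 \<and> (c i \<noteq> 0 \<longrightarrow> ll i > 0)"
    "(\<Sum>i\<in>A \<union> S. c i *\<^sub>R Gs i) = 0" "(\<Sum>i\<in>A \<union> S. c i * ll i) > 0"
proof -
  obtain r ll nh \<theta>l where r: "strict_mono r"
    and lim: "\<And>i. i \<in> A \<union> S \<Longrightarrow> (\<lambda>k. multiplier (r k) i) \<longlonglongrightarrow> ll i"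
    and \<theta>l: "\<theta>l > 0" and id1: "\<theta>l *\<^sub>R (\<Sum>i\<in>A. ll i *\<^sub>R Gs i) + (\<Sum>j\<in>S. nh j *\<^sub>R Gs j) = 0"
    and id2: "\<theta>l * (\<Sum>i\<in>A. (ll i)\<^sup>2) + (\<Sum>j\<in>S. nh j * ll j) = \<theta>l"
    by (rule limit_normalized_multipliers[OF assms]) (rule that)
  have ll_nonneg: "ll i \<ge> 0" if "i \<in> A" for i
  proof (rule tendsto_lowerbound[OF lim])
    show "eventually (\<lambda>k. 0 \<le> multiplier (r k) i) sequentially"
      using multiplier_nonneg[OF that] by simp
  qed (use that in auto)
  define c where "c i = (if i \<in> A then \<theta>l * ll i else nh i)" for i
  have split: "(\<Sum>i\<in>A \<union> S. f i (c i)) = (\<Sum>i\<in>A. f i (\<theta>l * ll i)) + (\<Sum>i\<in>S. f i (nh i))"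
    for f :: "'i \<Rightarrow> real \<Rightarrow> 'b::comm_monoid_add"
  proof -
    have "(\<Sum>i\<in>A \<union> S. f i (c i)) = (\<Sum>i\<in>A. f i (c i)) + (\<Sum>i\<in>S. f i (c i))"
      using finite_A finite_S disjoint_S by (simp add: sum.union_disjoint)
    moreover have "(\<Sum>i\<in>S. f i (c i)) = (\<Sum>i\<in>S. f i (nh i))"
      using disjoint_S by (intro sum.cong) (auto simp: c_def)
    ultimately show ?thesis by (simp add: c_def)
  qed
  show ?thesis
  proof (rule that[OF r lim])
    show "\<forall>i\<in>A. c i \<ge> 0 \<and> (c i \<noteq> 0 \<longrightarrow> ll i > 0)"
      using ll_nonneg \<theta>l by (auto simp: c_def less_le)
    show "(\<Sum>i\<in>A \<union> S. c i *\<^sub>R Gs i) = 0"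
      using id1 split[of "\<lambda>i x. x *\<^sub>R Gs i"] by (simp add: scaleR_sum_right)
    show "(\<Sum>i\<in>A \<union> S. c i * ll i) > 0"
      using id2 \<theta>l split[of "\<lambda>i x. x * ll i"] by (simp add: sum_distrib_left power2_eq_square mult.assoc)
  qed auto
qed

lemma active_if_limit_multiplier_pos:
  assumes r: "strict_mono r" and i: "i \<in> A"
    and lim: "(\<lambda>k. multiplier (r k) i) \<longlonglongrightarrow> l" and l: "l > 0"
  shows "i \<in> Act"
proof (rule ccontr)
  assume "i \<notin> Act"
  with i have "eventually (\<lambda>k. val k i (minimizer k) < 0) sequentially"
    using inactive minimizer_tendsto by blast
  from eventually_subseq[OF r this]
  have "eventually (\<lambda>k. multiplier (r k) i = 0) sequentially"
    by (rule eventually_mono) (simp add: multiplier_def residual_def i)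
  then have "l = 0"
    using LIMSEQ_eventually_eq_unique[OF lim tendsto_const] by blast
  with l show False by simp
qed

text \<open>On \<open>K \<union> S\<close> the multipliers are the constraint values at the minimiser divided by the
  violation, so this follows from \<open>nonneg_gradient_dependence_value_nonpos\<close>.\<close>
lemma dependence_multiplier_pairing_nonpos:
  assumes K: "K \<subseteq> A" and pos: "violation k (minimizer k) > 0"
    and e: "\<And>i. i \<in> K \<Longrightarrow> e i \<ge> 0" and mult: "\<And>i. i \<in> K \<Longrightarrow> multiplier k i > 0"
    and dep: "(\<Sum>i\<in>K \<union> S. e i *\<^sub>R G k i (minimizer k)) = 0"
  shows "(\<Sum>i\<in>K \<union> S. e i * multiplier k i) \<le> 0"
proof -
  let ?w = "minimizer k" and ?V = "violation k (minimizer k)"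
  obtain u where u: "feasible k u"
    using feasible_point[of k] unfolding feasible_def by blast
  have "(\<Sum>i\<in>K \<union> S. e i * val k i ?w) \<le> 0"
  proof (rule nonneg_gradient_dependence_value_nonpos)
    show "finite K" "finite S" "K \<inter> S = {}"
      using K finite_A finite_S disjoint_S finite_subset by blast+
    show "convex_on UNIV (val k i)" "(val k i has_derivative (\<lambda>v. G k i ?w \<bullet> v)) (at ?w)"
      "val k i u \<le> 0" if "i \<in> K" for i
      using that K convex_val has_derivative_val u by (auto simp: feasible_def)
    show "val k j ?w - val k j u = G k j ?w \<bullet> (?w - u)" "val k j u = 0" if "j \<in> S" for j
      using that S_subset affine_val[of j k ?w u] u by (auto simp: feasible_def)
  qed (use e dep in auto)
  moreover have "val k i ?w = ?V * multiplier k i" if "i \<in> K \<union> S" for i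
  proof -
    have "residual k i ?w = val k i ?w"
      using that mult[of i] K S_subset disjoint pos
      by (auto simp: residual_def multiplier_def zero_less_divide_iff)
    then show ?thesis using pos by (simp add: multiplier_def)
  qed
  ultimately have "?V * (\<Sum>i\<in>K \<union> S. e i * multiplier k i) \<le> 0"
    by (simp add: sum_distrib_left mult.left_commute)
  then show ?thesis using pos by (simp add: mult_le_0_iff)
qed

lemma minimal_active_dependence:
  assumes "eventually (\<lambda>k. violation k (minimizer k) > 0) sequentially"
  obtains r ll c K where "strict_mono r" "\<And>i. i \<in> A \<union> S \<Longrightarrow> (\<lambda>k. multiplier (r k) i) \<longlonglongrightarrow> ll i"
    "K \<subseteq> Act" "K \<noteq> {}" "pos_lin_dep K S Gs" "\<And>i. i \<in> K \<Longrightarrow> c i > 0 \<and> ll i > 0"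
    "(\<Sum>i\<in>K \<union> S. c i * ll i) > 0"
    "\<forall>d. (\<forall>i\<in>A - K. d i = 0) \<and> (\<Sum>i\<in>A \<union> S. d i *\<^sub>R Gs i) = 0 \<longrightarrow> (\<exists>t. \<forall>i\<in>A \<union> S. d i = t * c i)"
proof -
  obtain r ll c0 where r: "strict_mono r" and lim: "\<And>i. i \<in> A \<union> S \<Longrightarrow> (\<lambda>k. multiplier (r k) i) \<longlonglongrightarrow> ll i"
    and c0: "\<forall>i\<in>A. c0 i \<ge> 0 \<and> (c0 i \<noteq> 0 \<longrightarrow> ll i > 0)" "(\<Sum>i\<in>A \<union> S. c0 i *\<^sub>R Gs i) = 0"
      "(\<Sum>i\<in>A \<union> S. c0 i * ll i) > 0"
    by (rule limit_positive_dependence[OF assms]) (rule that)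
  obtain c K where K: "K \<subseteq> A" "K \<noteq> {}" and cK: "\<And>i. i \<in> K \<Longrightarrow> c i > 0 \<and> ll i > 0"
    and c_out: "\<And>i. i \<in> A - K \<Longrightarrow> c i = 0" and c_dep: "(\<Sum>i\<in>A \<union> S. c i *\<^sub>R Gs i) = 0"
    and c_ll: "(\<Sum>i\<in>A \<union> S. c i * ll i) > 0"
    and ker: "\<forall>d. (\<forall>i\<in>A - K. d i = 0) \<and> (\<Sum>i\<in>A \<union> S. d i *\<^sub>R Gs i) = 0 \<longrightarrow>
      (\<exists>t. \<forall>i\<in>A \<union> S. d i = t * c i)"
    by (rule minimal_positive_dependence[OF finite_A finite_S disjoint_S indep_S c0]) (rule that)
  have finK: "finite K" and disjK: "K \<inter> S = {}"
    using K finite_A disjoint_S finite_subset by blast+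
  have to_KS: "(\<Sum>i\<in>A \<union> S. f i) = (\<Sum>i\<in>K \<union> S. f i)" if "\<And>i. i \<in> A - K \<Longrightarrow> f i = 0"
    for f :: "'i \<Rightarrow> 'b::comm_monoid_add"
    using that K finite_A finite_S by (intro sum.mono_neutral_right) auto
  have "K \<subseteq> Act"
    using active_if_limit_multiplier_pos[OF r] lim cK K by blast
  moreover have "pos_lin_dep K S Gs"
    unfolding pos_lin_dep_def
  proof (intro exI conjI)
    show "\<forall>i\<in>K. c i \<ge> 0" using cK by (auto intro: less_imp_le)
    show "(\<exists>i\<in>K. c i \<noteq> 0) \<or> (\<exists>i\<in>S. c i \<noteq> 0)" using cK K(2) by fastforce
    show "(\<Sum>i\<in>K. c i *\<^sub>R Gs i) + (\<Sum>i\<in>S. c i *\<^sub>R Gs i) = 0"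
      using c_dep to_KS[of "\<lambda>i. c i *\<^sub>R Gs i"] c_out finK finite_S disjK by (simp add: sum.union_disjoint)
  qed
  moreover have "(\<Sum>i\<in>K \<union> S. c i * ll i) > 0"
    using c_ll to_KS[of "\<lambda>i. c i * ll i"] c_out by simp
  ultimately show ?thesis
    using that[OF r lim] K(2) cK ker by blast
qed

lemma converging_dependences:
  assumes pos: "eventually (\<lambda>k. violation k (minimizer k) > 0) sequentially"
  obtains q K c ll e t where "strict_mono q" "K \<subseteq> A" "\<And>i. i \<in> K \<Longrightarrow> c i > 0 \<and> ll i > 0"
    "\<And>i. i \<in> A \<union> S \<Longrightarrow> (\<lambda>k. multiplier (q k) i) \<longlonglongrightarrow> ll i"
    "\<And>k. (\<Sum>i\<in>K \<union> S. e k i *\<^sub>R G (q k) i (minimizer (q k))) = 0"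
    "\<And>i. i \<in> K \<union> S \<Longrightarrow> (\<lambda>k. e k i) \<longlonglongrightarrow> t * c i" "t > 0" "(\<Sum>i\<in>K \<union> S. c i * ll i) > 0"
proof -
  obtain r ll c K where r: "strict_mono r" and lim: "\<And>i. i \<in> A \<union> S \<Longrightarrow> (\<lambda>k. multiplier (r k) i) \<longlonglongrightarrow> ll i"
    and KAct: "K \<subseteq> Act" and Kne: "K \<noteq> {}" and pld: "pos_lin_dep K S Gs" and cK: "\<And>i. i \<in> K \<Longrightarrow> c i > 0 \<and> ll i > 0"
    and c_ll: "(\<Sum>i\<in>K \<union> S. c i * ll i) > 0"
    and ker: "\<forall>d. (\<forall>i\<in>A - K. d i = 0) \<and> (\<Sum>i\<in>A \<union> S. d i *\<^sub>R Gs i) = 0 \<longrightarrow>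
      (\<exists>t. \<forall>i\<in>A \<union> S. d i = t * c i)"
    by (rule minimal_active_dependence[OF pos]) (rule that)
  have K: "K \<subseteq> A" using KAct Act_subset by blast
  have finKS: "finite (K \<union> S)" using K finite_A finite_S finite_subset by blast
  \<comment> \<open>RCPLD turns the limiting positive dependence into dependences along the sequence\<close>
  have "eventually (\<lambda>k. fam_lin_dep (K \<union> S) (\<lambda>i. G k i (minimizer k))) sequentially"
    using rcpld[OF KAct pld minimizer_tendsto] .
  from eventually_subseq[OF r this]
  have dep: "frequently (\<lambda>k. fam_lin_dep (K \<union> S) (\<lambda>i. G (r k) i (minimizer (r k)))) sequentially"
    by (rule eventually_frequently[rotated]) simp
  have conv: "\<forall>i\<in>K \<union> S. (\<lambda>k. G (r k) i (minimizer (r k))) \<longlonglongrightarrow> Gs i"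
    using K S_subset LIMSEQ_subseq_LIMSEQ[OF grad_tendsto[OF _ minimizer_tendsto] r]
    by (auto simp: o_def)
  obtain r2 e eh where r2: "strict_mono r2"
    and e_dep: "\<And>k. (\<Sum>i\<in>K \<union> S. e k i *\<^sub>R G (r (r2 k)) i (minimizer (r (r2 k)))) = 0"
    and "\<And>k. (\<Sum>i\<in>K \<union> S. e k i * c i) \<ge> 0"
    and lim_e: "\<And>i. i \<in> K \<union> S \<Longrightarrow> (\<lambda>k. e k i) \<longlonglongrightarrow> eh i"
    and eh: "(\<Sum>i\<in>K \<union> S. \<bar>eh i\<bar>) = 1" "(\<Sum>i\<in>K \<union> S. eh i *\<^sub>R Gs i) = 0" "(\<Sum>i\<in>K \<union> S. eh i * c i) \<ge> 0"
    by (rule fam_lin_dep_limit[OF finKS conv dep]) (rule that)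
  \<comment> \<open>by minimality of the support, the limit dependence is a positive multiple of \<open>c\<close>\<close>
  obtain t where t: "\<And>i. i \<in> K \<union> S \<Longrightarrow> eh i = t * c i"
  proof -
    define d where "d i = (if i \<in> K \<union> S then eh i else 0)" for i
    have "(\<Sum>i\<in>A \<union> S. d i *\<^sub>R Gs i) = 0"
      using eh(2) K finite_A finite_S by (subst sum.mono_neutral_right[of "A \<union> S" "K \<union> S"]) (auto simp: d_def)
    moreover have "\<forall>i\<in>A - K. d i = 0"
      using disjoint_S by (auto simp: d_def)
    ultimately have "\<exists>t. \<forall>i\<in>A \<union> S. d i = t * c i" using ker by blast
    then obtain t where t: "\<forall>i\<in>A \<union> S. d i = t * c i" ..
    have "eh i = t * c i" if "i \<in> K \<union> S" for i
      using t that K by (force simp: d_def)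
    then show ?thesis by (rule that)
  qed
  have "t > 0"
  proof -
    obtain i0 where i0: "i0 \<in> K" using Kne by blast
    have "c i0 * c i0 \<le> (\<Sum>i\<in>K \<union> S. c i * c i)"
      using finKS i0 by (intro member_le_sum) auto
    moreover have "c i0 * c i0 > 0" using cK[OF i0] by simp
    moreover have "t * (\<Sum>i\<in>K \<union> S. c i * c i) \<ge> 0"
      using eh(3) by (simp add: t sum_distrib_left mult.assoc)
    moreover have "t \<noteq> 0" using eh(1) t by auto
    ultimately show ?thesis by (auto simp: zero_le_mult_iff)
  qed
  define q where "q = r \<circ> r2"
  have lim_q: "(\<lambda>k. multiplier (q k) i) \<longlonglongrightarrow> ll i" if "i \<in> A \<union> S" for i
    using LIMSEQ_subseq_LIMSEQ[OF lim[OF that] r2] by (simp add: q_def o_def)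
  show ?thesis
  proof (rule that[OF _ K cK lim_q _ _ \<open>t > 0\<close> c_ll])
    show "strict_mono q" unfolding q_def using r r2 by (rule strict_mono_o)
    show "(\<Sum>i\<in>K \<union> S. e k i *\<^sub>R G (q k) i (minimizer (q k))) = 0" for k
      using e_dep[of k] by (simp add: q_def)
    show "(\<lambda>k. e k i) \<longlonglongrightarrow> t * c i" if "i \<in> K \<union> S" for i
      using lim_e[OF that] t[OF that] by simp
  qed
qed

lemma frequently_feasible_minimizer: "frequently (\<lambda>k. feasible k (minimizer k)) sequentially"
proof (rule ccontr)
  assume "\<not> ?thesis"
  then have "eventually (\<lambda>k. \<not> feasible k (minimizer k)) sequentially"
    by (simp add: not_frequently)
  then have pos: "eventually (\<lambda>k. violation k (minimizer k) > 0) sequentially"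
    by (rule eventually_mono) (use feasible_if_violation_eq_0 violation_nonneg in \<open>force simp: less_le\<close>)
  obtain q K c ll e t where q: "strict_mono q" and K: "K \<subseteq> A" and cK: "\<And>i. i \<in> K \<Longrightarrow> c i > 0 \<and> ll i > 0"
    and lim_q: "\<And>i. i \<in> A \<union> S \<Longrightarrow> (\<lambda>k. multiplier (q k) i) \<longlonglongrightarrow> ll i"
    and e_dep: "\<And>k. (\<Sum>i\<in>K \<union> S. e k i *\<^sub>R G (q k) i (minimizer (q k))) = 0"
    and lim_e: "\<And>i. i \<in> K \<union> S \<Longrightarrow> (\<lambda>k. e k i) \<longlonglongrightarrow> t * c i" and "t > 0"
    and c_ll: "(\<Sum>i\<in>K \<union> S. c i * ll i) > 0"
    by (rule converging_dependences[OF pos]) (rule that)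
  have finKS: "finite (K \<union> S)" using K finite_A finite_S finite_subset by blast
  have "(\<lambda>k. \<Sum>i\<in>K \<union> S. e k i * multiplier (q k) i) \<longlonglongrightarrow> (\<Sum>i\<in>K \<union> S. t * c i * ll i)"
    using K by (intro tendsto_intros lim_e lim_q) auto
  moreover have "(\<Sum>i\<in>K \<union> S. t * c i * ll i) > 0"
    using c_ll \<open>t > 0\<close> by (simp add: sum_distrib_left[symmetric] mult.assoc)
  ultimately have "eventually (\<lambda>k. (\<Sum>i\<in>K \<union> S. e k i * multiplier (q k) i) > 0) sequentially"
    by (rule order_tendstoD)
  moreover have "eventually (\<lambda>k. \<forall>i\<in>K. e k i > 0 \<and> multiplier (q k) i > 0) sequentially"
  proof -
    have "finite K" using finKS by simp
    moreover have "eventually (\<lambda>k. e k i > 0 \<and> multiplier (q k) i > 0) sequentially" if i: "i \<in> K" for i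
    proof (rule eventually_conj)
      show "eventually (\<lambda>k. e k i > 0) sequentially"
        using order_tendstoD(1)[OF lim_e[of i]] i cK[OF i] \<open>t > 0\<close> by simp
      show "eventually (\<lambda>k. multiplier (q k) i > 0) sequentially"
        using order_tendstoD(1)[OF lim_q[of i]] i K cK[OF i] by blast
    qed
    ultimately show ?thesis by (simp add: eventually_ball_finite_distrib)
  qed
  moreover have "eventually (\<lambda>k. violation (q k) (minimizer (q k)) > 0) sequentially"
    using eventually_subseq[OF q pos] .
  ultimately have "eventually (\<lambda>k. False) sequentially"
  proof eventually_elim
    case (elim k)
    then show False
      using dependence_multiplier_pairing_nonpos[OF K, of "q k" "e k"] e_dep[of k]
      by (auto simp: less_imp_le)
  qed
  then show False by simp
qed

lemma frequently_feasible_near: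
  assumes "\<epsilon> > 0"
  shows "frequently (\<lambda>k. \<exists>y. feasible k y \<and> dist y yb < \<epsilon>) sequentially"
proof -
  have "eventually (\<lambda>k. dist (minimizer k) yb < \<epsilon>) sequentially"
    using tendstoD[OF minimizer_tendsto assms] .
  from frequently_eventually_conj[OF frequently_feasible_minimizer this] show ?thesis
    by (rule frequently_elim1) blast
qed

end

section \<open>The lower-level problem\<close>

lemma cont_diff_isCont: "cont_diff g \<Longrightarrow> isCont g z"
  unfolding cont_diff_def using has_derivative_continuous by blast

lemma cont_diff_tendsto: "cont_diff g \<Longrightarrow> zs \<longlonglongrightarrow> z \<Longrightarrow> (\<lambda>k. g (zs k)) \<longlonglongrightarrow> g z"
  using cont_diff_isCont isCont_tendsto_compose by blast

lemma grad_y_eq: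
  fixes g :: "(real^'n) \<times> (real^'m) \<Rightarrow> real"
  assumes "\<And>z. (g has_derivative blinfun_apply (g' z)) (at z)"
  shows "grad_y g x y = (\<chi> j. blinfun_apply (g' (x, y)) (0, axis j 1))"
  unfolding grad_y_def frechet_derivative_at[OF assms[of "(x, y)"], symmetric] ..

lemma has_derivative_grad_y:
  fixes g :: "(real^'n) \<times> (real^'m) \<Rightarrow> real"
  assumes "cont_diff g"
  shows "((\<lambda>y. g (x, y)) has_derivative (\<lambda>v. grad_y g x y \<bullet> v)) (at y)"
proof -
  obtain g' where g': "\<And>z. (g has_derivative blinfun_apply (g' z)) (at z)"
    using assms unfolding cont_diff_def by blast
  have "((\<lambda>y. (x, y)) has_derivative (\<lambda>v. (0, v))) (at y)"
    by (rule has_derivative_Pair[OF has_derivative_const has_derivative_ident])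
  from has_derivative_compose[OF this g']
  have "((\<lambda>y. g (x, y)) has_derivative (\<lambda>v. blinfun_apply (g' (x, y)) (0, v))) (at y)" .
  moreover have "blinfun_apply (g' (x, y)) (0, v) = grad_y g x y \<bullet> v" for v
  proof -
    have "(0::real^'n, v) = (\<Sum>j\<in>UNIV. (v $ j) *\<^sub>R (0, axis j 1))"
      using basis_expansion[of v] by (simp add: scalar_mult_eq_scaleR prod_eq_iff fst_sum snd_sum)
    moreover have "blinfun_apply (g' (x, y)) (0, c *\<^sub>R a) = c * blinfun_apply (g' (x, y)) (0, a)" for c a
      using blinfun.scaleR_right[of "g' (x, y)" c "(0, a)"] by simp
    ultimately have "blinfun_apply (g' (x, y)) (0, v) = (\<Sum>j\<in>UNIV. (v $ j) * blinfun_apply (g' (x, y)) (0, axis j 1))"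
      by (simp add: blinfun.sum_right)
    then show ?thesis
      unfolding grad_y_eq[OF g'] inner_vec_def by (simp add: mult.commute)
  qed
  ultimately show ?thesis by simp
qed

lemma grad_y_tendsto:
  fixes g :: "(real^'n) \<times> (real^'m) \<Rightarrow> real"
  assumes "cont_diff g" and "xs \<longlonglongrightarrow> x" and "ys \<longlonglongrightarrow> y"
  shows "(\<lambda>k. grad_y g (xs k) (ys k)) \<longlonglongrightarrow> grad_y g x y"
proof -
  obtain g' where g': "\<And>z. (g has_derivative blinfun_apply (g' z)) (at z)" "continuous_on UNIV g'"
    using assms(1) unfolding cont_diff_def by blast
  have "(\<lambda>k. g' (xs k, ys k)) \<longlonglongrightarrow> g' (x, y)"
    using continuous_on_tendsto_compose[OF g'(2) tendsto_Pair[OF assms(2,3)]] by simp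
  then show ?thesis
    unfolding grad_y_eq[OF g'(1)] by (intro tendsto_vec_lambda blinfun.tendsto tendsto_const)
qed

lemma affine_grad_y:
  fixes g :: "(real^'n) \<times> (real^'m) \<Rightarrow> real"
  assumes "cont_diff g" and "\<forall>y. g (x, y) = a \<bullet> y + b"
  shows "g (x, y) - g (x, z) = grad_y g x y \<bullet> (y - z)"
proof -
  have "((\<lambda>y. g (x, y)) has_derivative (\<lambda>v. a \<bullet> v)) (at y)"
    using assms(2) by (auto intro!: derivative_eq_intros)
  with has_derivative_grad_y[OF assms(1)] have "(\<lambda>v. grad_y g x y \<bullet> v) = (\<lambda>v. a \<bullet> v)"
    by (rule has_derivative_unique)
  then show ?thesis
    using assms(2) by (metis inner_diff_right add_diff_cancel_right)
qed

locale lower_level =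
  fixes f :: "(real^'n) \<times> (real^'m) \<Rightarrow> real"
    and h :: "nat \<Rightarrow> (real^'n) \<times> (real^'m) \<Rightarrow> real"
    and l p :: nat and X :: "(real^'n) set"
  assumes l_le_p: "l \<le> p"
    and cont_diff_f: "cont_diff f" and cont_diff_h: "\<forall>i\<in>{1..p}. cont_diff (h i)"
    and convex_f: "\<forall>x. convex_on UNIV (\<lambda>y. f (x, y))"
    and convex_h: "\<forall>x. \<forall>i\<in>{1..l}. convex_on UNIV (\<lambda>y. h i (x, y))"
    and affine_h: "\<forall>x. \<forall>i\<in>{l+1..p}. \<exists>a b. \<forall>y. h i (x, y) = a \<bullet> y + b"
    and X_dom: "X \<subseteq> domG h l p"
    and locally_bounded: "\<forall>x\<in>X. locally_bounded_at (Gam h l p) x"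
    and RCPLD: "\<forall>x y. x \<in> X \<and> y \<in> Sol f h l p x \<longrightarrow> RCPLD_S f h l p (domG h l p) x y"
begin

definition lower_value :: "real^'n \<Rightarrow> real" where
  "lower_value x = real_of_ereal (phi f h l p x)"

lemma Gam_iff: "y \<in> Gam h l p x \<longleftrightarrow> (\<forall>i\<in>{1..l}. h i (x, y) \<le> 0) \<and> (\<forall>i\<in>{l+1..p}. h i (x, y) = 0)"
  by (simp add: Gam_def)

lemma Gam_closed_graph:
  assumes "\<And>k. ys k \<in> Gam h l p (xs k)" and "xs \<longlonglongrightarrow> x" and "ys \<longlonglongrightarrow> y"
  shows "y \<in> Gam h l p x"
proof -
  have lim: "(\<lambda>k. h i (xs k, ys k)) \<longlonglongrightarrow> h i (x, y)" if "i \<in> {1..p}" for i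
    using cont_diff_tendsto[OF _ tendsto_Pair[OF assms(2,3)]] cont_diff_h that by blast
  have "h i (x, y) \<le> 0" if "i \<in> {1..l}" for i
    using that l_le_p assms(1) by (intro tendsto_upperbound[OF lim]) (auto simp: Gam_iff)
  moreover have "h i (x, y) = 0" if "i \<in> {l+1..p}" for i
    using that assms(1) LIMSEQ_eventually_eq_unique[OF lim tendsto_const] by (auto simp: Gam_iff)
  ultimately show ?thesis by (simp add: Gam_iff)
qed

lemma compact_Gam:
  assumes "x \<in> X"
  shows "compact (Gam h l p x)"
proof -
  have "closed (Gam h l p x)"
    unfolding closed_sequential_limits using Gam_closed_graph[of _ "\<lambda>_. x"] by blast
  moreover have "bounded (Gam h l p x)"
    using locally_bounded assms unfolding locally_bounded_at_def by (meson bounded_subset)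
  ultimately show ?thesis by (simp add: compact_eq_bounded_closed)
qed

lemma lower_value_attained:
  assumes "x \<in> X"
  shows "phi f h l p x = ereal (lower_value x)"
    and "\<And>y. y \<in> Gam h l p x \<Longrightarrow> lower_value x \<le> f (x, y)"
    and "\<exists>y\<in>Gam h l p x. f (x, y) = lower_value x"
proof -
  have "Gam h l p x \<noteq> {}" using X_dom assms by (auto simp: domG_def)
  moreover have "continuous_on (Gam h l p x) (\<lambda>y. f (x, y))"
    using has_derivative_continuous[OF has_derivative_grad_y[OF cont_diff_f]]
    by (intro continuous_at_imp_continuous_on) blast
  ultimately obtain y0 where y0: "y0 \<in> Gam h l p x" "\<forall>y\<in>Gam h l p x. f (x, y0) \<le> f (x, y)"
    using continuous_attains_inf[OF compact_Gam[OF assms]] by blast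
  have "phi f h l p x = ereal (f (x, y0))"
    unfolding phi_def using y0 by (intro Inf_eqI) auto
  then have "lower_value x = f (x, y0)" by (simp add: lower_value_def)
  with y0 \<open>phi f h l p x = ereal (f (x, y0))\<close> show "phi f h l p x = ereal (lower_value x)"
    "\<And>y. y \<in> Gam h l p x \<Longrightarrow> lower_value x \<le> f (x, y)" "\<exists>y\<in>Gam h l p x. f (x, y) = lower_value x"
    by auto
qed

lemma Sol_iff:
  assumes "x \<in> X"
  shows "y \<in> Sol f h l p x \<longleftrightarrow> y \<in> Gam h l p x \<and> f (x, y) \<le> lower_value x"
  using lower_value_attained[OF assms] unfolding Sol_def by (auto intro: antisym)

lemma lower_value_lsc:
  assumes xs: "\<And>k. xs k \<in> X" "xs \<longlonglongrightarrow> x" and x: "x \<in> X" and e: "e > 0"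
  shows "eventually (\<lambda>k. lower_value (xs k) > lower_value x - e) sequentially"
proof (rule ccontr)
  assume "\<not> ?thesis"
  from not_eventually_sequentiallyD[OF this]
  obtain r :: "nat \<Rightarrow> nat" where r: "strict_mono r" "\<And>n. lower_value (xs (r n)) \<le> lower_value x - e"
    by (auto simp: not_less)
  have "locally_bounded_at (Gam h l p) x" using locally_bounded x by blast
  then obtain B V where BV: "bounded B" "open V" "x \<in> V" "\<forall>z\<in>V. Gam h l p z \<subseteq> B"
    unfolding locally_bounded_at_def by blast
  have "\<forall>k. \<exists>u. u \<in> Gam h l p (xs k) \<and> f (xs k, u) = lower_value (xs k)"
    using lower_value_attained(3) xs(1) by blast
  then obtain u where "\<forall>k. u k \<in> Gam h l p (xs k) \<and> f (xs k, u k) = lower_value (xs k)"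
    by (rule choice[THEN exE])
  then have u: "\<And>k. u k \<in> Gam h l p (xs k)" "\<And>k. f (xs k, u k) = lower_value (xs k)"
    by blast+
  have xr: "(\<lambda>n. xs (r n)) \<longlonglongrightarrow> x" using LIMSEQ_subseq_LIMSEQ[OF xs(2) r(1)] by (simp add: o_def)
  obtain N where N: "\<And>n. n \<ge> N \<Longrightarrow> xs (r n) \<in> V"
    using topological_tendstoD[OF xr BV(2,3)] unfolding eventually_sequentially by blast
  have "u (r (n + N)) \<in> B" for n
    using BV(4) N[of "n + N"] u(1) by auto
  then have "bounded (range (\<lambda>n. u (r (n + N))))"
    by (intro bounded_subset[OF BV(1)]) auto
  then obtain y r' where r': "strict_mono r'" "((\<lambda>n. u (r (n + N))) \<circ> r') \<longlonglongrightarrow> y"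
    using bounded_imp_convergent_subsequence by blast
  define s where "s n = r (r' n + N)" for n
  have "strict_mono s"
    using r(1) r'(1) by (simp add: s_def strict_mono_def)
  then have xs_s: "(\<lambda>n. xs (s n)) \<longlonglongrightarrow> x"
    using LIMSEQ_subseq_LIMSEQ[OF xs(2)] by (simp add: o_def)
  have us: "(\<lambda>n. u (s n)) \<longlonglongrightarrow> y" using r'(2) by (simp add: o_def s_def)
  have "y \<in> Gam h l p x"
    by (rule Gam_closed_graph[OF u(1) xs_s us])
  then have "lower_value x \<le> f (x, y)" using lower_value_attained(2)[OF x] by blast
  moreover have "(\<lambda>n. f (xs (s n), u (s n))) \<longlonglongrightarrow> f (x, y)"
    by (rule cont_diff_tendsto[OF cont_diff_f tendsto_Pair[OF xs_s us]])
  then have "f (x, y) \<le> lower_value x - e"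
    by (rule tendsto_upperbound) (simp_all add: u(2) r(2) s_def)
  ultimately show False using e by simp
qed

text \<open>The constraint functions of the lower-level problem with \<open>h\<^sub>0 = f - \<phi>\<close>: the solution set
  \<open>S(x)\<close> is the feasible set of \<open>h\<^sub>0, \<dots>, h\<^sub>l \<le> 0\<close>, \<open>h\<^sub>l\<^sub>+\<^sub>1 = \<dots> = h\<^sub>p = 0\<close>.\<close>
definition constr :: "real^'n \<Rightarrow> nat \<Rightarrow> real^'m \<Rightarrow> real" where
  "constr x i y = (if i = 0 then f (x, y) - lower_value x else h i (x, y))"

lemma Sol_iff_constr:
  assumes "x \<in> X"
  shows "y \<in> Sol f h l p x \<longleftrightarrow> (\<forall>i\<in>{0..l}. constr x i y \<le> 0) \<and> (\<forall>j\<in>{l+1..p}. constr x j y = 0)"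
proof -
  have "(\<forall>i\<in>{0..l}. constr x i y \<le> 0) \<longleftrightarrow> f (x, y) \<le> lower_value x \<and> (\<forall>i\<in>{1..l}. h i (x, y) \<le> 0)"
    by (auto simp: constr_def)
  moreover have "(\<forall>j\<in>{l+1..p}. constr x j y = 0) \<longleftrightarrow> (\<forall>j\<in>{l+1..p}. h j (x, y) = 0)"
    by (simp add: constr_def)
  ultimately show ?thesis
    using Sol_iff[OF assms] by (auto simp: Gam_iff)
qed

lemma cont_diff_h_index: "i \<in> {0..l} \<union> {l+1..p} \<Longrightarrow> i \<noteq> 0 \<Longrightarrow> cont_diff (h i)"
  using cont_diff_h l_le_p by auto

lemma constr_0: "constr x 0 = (\<lambda>y. f (x, y) - lower_value x)"
  by (simp add: fun_eq_iff constr_def)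

lemma constr_pos: "i \<noteq> 0 \<Longrightarrow> constr x i = (\<lambda>y. h i (x, y))"
  by (simp add: fun_eq_iff constr_def)

lemma has_derivative_constr:
  assumes "i \<in> {0..l} \<union> {l+1..p}"
  shows "(constr x i has_derivative (\<lambda>v. gy f h i x y \<bullet> v)) (at y)"
proof (cases "i = 0")
  case True
  have "((\<lambda>y. f (x, y) - lower_value x) has_derivative (\<lambda>v. grad_y f x y \<bullet> v - 0)) (at y)"
    by (intro has_derivative_diff has_derivative_grad_y cont_diff_f has_derivative_const)
  then show ?thesis using True by (simp add: constr_0 gy_def)
next
  case False
  then show ?thesis
    using has_derivative_grad_y[OF cont_diff_h_index[OF assms False]] by (simp add: constr_pos gy_def)
qed

lemma convex_constr:
  assumes "i \<in> {0..l}"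
  shows "convex_on UNIV (constr x i)"
proof (cases "i = 0")
  case True
  have "convex_on UNIV (\<lambda>y. f (x, y) - lower_value x)"
    using convex_f by (intro convex_on_diff) (auto simp: concave_on_const)
  then show ?thesis using True by (simp add: constr_0)
next
  case False
  then show ?thesis using assms convex_h by (simp add: constr_pos)
qed

lemma affine_constr:
  assumes "j \<in> {l+1..p}"
  shows "constr x j y - constr x j z = gy f h j x y \<bullet> (y - z)"
proof -
  have "j \<noteq> 0" using assms by auto
  obtain a b where "\<forall>y. h j (x, y) = a \<bullet> y + b" using affine_h assms by blast
  with assms \<open>j \<noteq> 0\<close> show ?thesis
    using affine_grad_y[OF cont_diff_h_index] by (simp add: constr_def gy_def)
qed

lemma gy_tendsto:
  assumes "i \<in> {0..l} \<union> {l+1..p}" and "xs \<longlonglongrightarrow> x" and "ys \<longlonglongrightarrow> y"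
  shows "(\<lambda>k. gy f h i (xs k) (ys k)) \<longlonglongrightarrow> gy f h i x y"
  using grad_y_tendsto[OF cont_diff_f assms(2,3)] grad_y_tendsto[OF cont_diff_h_index[OF assms(1)] assms(2,3)]
  by (cases "i = 0") (simp_all add: gy_def)

lemma constr_tendsto:
  assumes "i \<in> {l+1..p} \<or> i \<in> {1..l}" and "xs \<longlonglongrightarrow> x" and "ys \<longlonglongrightarrow> y"
  shows "(\<lambda>k. constr (xs k) i (ys k)) \<longlonglongrightarrow> constr x i y"
proof -
  have "i \<noteq> 0" "i \<in> {0..l} \<union> {l+1..p}" using assms(1) by auto
  then show ?thesis
    using cont_diff_tendsto[OF cont_diff_h_index tendsto_Pair[OF assms(2,3)]] by (simp add: constr_def)
qed

lemma constr_ineq_limsup: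
  assumes xs: "\<And>k. xs k \<in> X" "xs \<longlonglongrightarrow> x" and x: "x \<in> X" and y: "y \<in> Sol f h l p x"
    and i: "i \<in> {0..l}" and e: "e > 0"
  shows "eventually (\<lambda>k. constr (xs k) i y < e) sequentially"
proof (cases "i = 0")
  case True
  have "eventually (\<lambda>k. lower_value (xs k) > lower_value x - e / 2) sequentially"
    using lower_value_lsc[OF xs x] e by simp
  moreover have "(\<lambda>k. f (xs k, y)) \<longlonglongrightarrow> f (x, y)"
    using cont_diff_tendsto[OF cont_diff_f tendsto_Pair[OF xs(2) tendsto_const]] .
  then have "eventually (\<lambda>k. f (xs k, y) < lower_value x + e / 2) sequentially"
    using y x e by (intro order_tendstoD(2)) (auto simp: Sol_iff)
  ultimately show ?thesis
    by eventually_elim (simp add: constr_def True)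
next
  case False
  with i have i: "i \<in> {1..l}" by auto
  then have "(\<lambda>k. constr (xs k) i y) \<longlonglongrightarrow> constr x i y"
    using constr_tendsto[OF _ xs(2) tendsto_const] by blast
  moreover have "h i (x, y) \<le> 0" using x y i by (simp add: Sol_iff Gam_iff)
  then have "constr x i y < e" using False e by (simp add: constr_def)
  ultimately show ?thesis by (rule order_tendstoD(2))
qed

lemma perturbed_constraints_at:
  assumes xs: "\<And>k. xs k \<in> X" "xs \<longlonglongrightarrow> x" and x: "x \<in> X" and y: "y \<in> Sol f h l p x"
  obtains S where "perturbed_constraints {0..l} {l+1..p} S ({0} \<union> {i\<in>{1..l}. h i (x, y) = 0})
    (\<lambda>k. constr (xs k)) (\<lambda>k i. gy f h i (xs k)) (\<lambda>i. gy f h i x y) y"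
proof -
  have RCPLD_xy: "RCPLD_S f h l p (domG h l p) x y" using RCPLD x y by blast
  obtain U S where U: "open U" "(x, y) \<in> U" and S: "S \<subseteq> {l+1..p}"
    and indep: "\<not> fam_lin_dep S (\<lambda>i. gy f h i x y)"
    and span_eq: "span ((\<lambda>i. gy f h i x y) ` S) = span ((\<lambda>i. gy f h i x y) ` {l+1..p})"
    and rank: "\<forall>x' y'. (x', y') \<in> U \<and> x' \<in> domG h l p \<longrightarrow>
      dim ((\<lambda>i. gy f h i x' y') ` {l+1..p}) = dim ((\<lambda>i. gy f h i x y) ` {l+1..p})"
    and dep: "\<forall>K. K \<subseteq> {0} \<union> {i\<in>{1..l}. h i (x, y) = 0} \<longrightarrow> pos_lin_dep K S (\<lambda>i. gy f h i x y) \<longrightarrow>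
      (\<forall>x' y'. (x', y') \<in> U \<and> x' \<in> domG h l p \<longrightarrow> fam_lin_dep (K \<union> S) (\<lambda>i. gy f h i x' y'))"
    using RCPLD_xy unfolding RCPLD_S_def by (elim exE conjE) (rule that)
  have near: "eventually (\<lambda>k. (xs k, ys k) \<in> U \<and> xs k \<in> domG h l p) sequentially" if "ys \<longlonglongrightarrow> y" for ys
    using topological_tendstoD[OF tendsto_Pair[OF xs(2) that] U]
    by (rule eventually_mono) (use xs(1) X_dom in blast)
  have yG: "y \<in> Gam h l p x" using y x Sol_iff by blast
  show ?thesis
  proof (rule that, unfold_locales)
    fix k i y' assume "i \<in> {0..l} \<union> {l+1..p}"
    then show "(constr (xs k) i has_derivative (\<lambda>v. gy f h i (xs k) y' \<bullet> v)) (at y')"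
      by (rule has_derivative_constr)
  next
    fix k j y' z assume "j \<in> {l+1..p}"
    then show "constr (xs k) j y' - constr (xs k) j z = gy f h j (xs k) y' \<bullet> (y' - z)"
      by (rule affine_constr)
  next
    fix k
    obtain u where "u \<in> Sol f h l p (xs k)"
      using lower_value_attained(3)[OF xs(1)] Sol_iff[OF xs(1)] by fastforce
    then show "\<exists>u. (\<forall>i\<in>{0..l}. constr (xs k) i u \<le> 0) \<and> (\<forall>j\<in>{l+1..p}. constr (xs k) j u = 0)"
      using Sol_iff_constr[OF xs(1)] by blast
  next
    fix i and e :: real assume "i \<in> {0..l}" "e > 0"
    then show "eventually (\<lambda>k. constr (xs k) i y < e) sequentially"
      by (rule constr_ineq_limsup[OF xs x y])
  next
    fix j assume j: "j \<in> {l+1..p}"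
    then have "(\<lambda>k. constr (xs k) j y) \<longlonglongrightarrow> constr x j y"
      using constr_tendsto[OF _ xs(2) tendsto_const] by blast
    moreover have "constr x j y = 0" using yG j by (auto simp: constr_def Gam_iff)
    ultimately show "(\<lambda>k. constr (xs k) j y) \<longlonglongrightarrow> 0" by simp
  next
    fix i ys assume "i \<in> {0..l} \<union> {l+1..p}" "ys \<longlonglongrightarrow> y"
    then show "(\<lambda>k. gy f h i (xs k) (ys k)) \<longlonglongrightarrow> gy f h i x y"
      using gy_tendsto xs(2) by blast
  next
    fix i ys assume "i \<in> {0..l} - ({0} \<union> {i\<in>{1..l}. h i (x, y) = 0})" and ys: "ys \<longlonglongrightarrow> y"
    then have i: "i \<in> {1..l}" "h i (x, y) \<noteq> 0" by auto
    moreover have "h i (x, y) \<le> 0" using yG i by (simp add: Gam_iff)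
    ultimately have "constr x i y < 0" by (simp add: constr_def)
    moreover have "(\<lambda>k. constr (xs k) i (ys k)) \<longlonglongrightarrow> constr x i y"
      using constr_tendsto[OF _ xs(2) ys] i by blast
    ultimately show "eventually (\<lambda>k. constr (xs k) i (ys k) < 0) sequentially"
      using order_tendstoD(2) by blast
  next
    fix ys assume ys: "ys \<longlonglongrightarrow> y"
    have "\<forall>i\<in>S. (\<lambda>k. gy f h i (xs k) (ys k)) \<longlonglongrightarrow> gy f h i x y"
      using S gy_tendsto[OF _ xs(2) ys] by blast
    then have "eventually (\<lambda>k. \<not> fam_lin_dep S (\<lambda>i. gy f h i (xs k) (ys k))) sequentially"
      by (rule fam_lin_indep_eventually[OF finite_subset[OF S finite_atLeastAtMost] indep])
    with near[OF ys]
    show "eventually (\<lambda>k. span ((\<lambda>j. gy f h j (xs k) (ys k)) ` {l+1..p})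
        \<subseteq> span ((\<lambda>j. gy f h j (xs k) (ys k)) ` S)) sequentially"
    proof eventually_elim
      case (elim k)
      then show ?case
        using span_subset_if_dim_eq[OF finite_atLeastAtMost S elim(2) indep _ span_eq] rank by blast
    qed
  next
    fix K ys assume "K \<subseteq> {0} \<union> {i\<in>{1..l}. h i (x, y) = 0}" "pos_lin_dep K S (\<lambda>i. gy f h i x y)"
      and ys: "ys \<longlonglongrightarrow> y"
    then have "\<forall>x' y'. (x', y') \<in> U \<and> x' \<in> domG h l p \<longrightarrow> fam_lin_dep (K \<union> S) (\<lambda>i. gy f h i x' y')"
      using dep by blast
    then show "eventually (\<lambda>k. fam_lin_dep (K \<union> S) (\<lambda>i. gy f h i (xs k) (ys k))) sequentially"
      using near[OF ys] by (auto elim: eventually_mono)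
  next
    fix k i assume "i \<in> {0..l}"
    then show "convex_on UNIV (constr (xs k) i)" by (rule convex_constr)
  qed (use S indep in auto)
qed

lemma Sol_inner_semicontinuous:
  assumes xs: "\<And>k. xs k \<in> X" "xs \<longlonglongrightarrow> x" and x: "x \<in> X" and y: "y \<in> Sol f h l p x" and \<epsilon>: "\<epsilon> > 0"
  shows "eventually (\<lambda>k. \<exists>y'\<in>Sol f h l p (xs k). dist y' y < \<epsilon>) sequentially"
proof (rule ccontr)
  assume "\<not> ?thesis"
  from not_eventually_sequentiallyD[OF this]
  obtain r :: "nat \<Rightarrow> nat" where r: "strict_mono r" "\<And>n. \<forall>y'\<in>Sol f h l p (xs (r n)). \<epsilon> \<le> dist y' y"
    by (auto simp: not_less)
  have "(xs \<circ> r) \<longlonglongrightarrow> x" using LIMSEQ_subseq_LIMSEQ[OF xs(2) r(1)] .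
  moreover have "\<And>k. (xs \<circ> r) k \<in> X" using xs(1) by simp
  ultimately obtain S where "perturbed_constraints {0..l} {l+1..p} S ({0} \<union> {i\<in>{1..l}. h i (x, y) = 0})
    (\<lambda>k. constr ((xs \<circ> r) k)) (\<lambda>k i. gy f h i ((xs \<circ> r) k)) (\<lambda>i. gy f h i x y) y"
    using perturbed_constraints_at[of "xs \<circ> r", OF _ _ x y] by blast
  then interpret pc: perturbed_constraints "{0..l}" "{l+1..p}" S "{0} \<union> {i\<in>{1..l}. h i (x, y) = 0}"
    "\<lambda>k. constr ((xs \<circ> r) k)" "\<lambda>k i. gy f h i ((xs \<circ> r) k)" "\<lambda>i. gy f h i x y" y .
  obtain k y' where "pc.feasible k y'" "dist y' y < \<epsilon>"
    using frequently_ex[OF pc.frequently_feasible_near[OF \<epsilon>]] by blast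
  moreover from this have "y' \<in> Sol f h l p (xs (r k))"
    using Sol_iff_constr[OF xs(1)] unfolding pc.feasible_def by simp
  ultimately show False using r(2) by fastforce
qed

lemma phi_p_lsc:
  assumes F: "cont_diff F" and xs: "\<And>k. xs k \<in> X" "xs \<longlonglongrightarrow> x" and x: "x \<in> X"
    and lim: "(\<lambda>k. phi_p F f h l p (xs k)) \<longlonglongrightarrow> m"
  shows "phi_p F f h l p x \<le> m"
  unfolding phi_p_def
proof (rule Sup_least, clarify)
  fix y assume y: "y \<in> Sol f h l p x"
  show "ereal (F (x, y)) \<le> m"
  proof (rule ereal_le_epsilon2)
    fix \<eta> :: real assume "\<eta> > 0"
    then obtain \<delta> where \<delta>: "\<delta> > 0" "\<And>z. dist z (x, y) < \<delta> \<Longrightarrow> dist (F z) (F (x, y)) < \<eta>"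
      using cont_diff_isCont[OF F, of "(x, y)"] unfolding continuous_at_eps_delta by blast
    have "eventually (\<lambda>k. dist (xs k) x < \<delta> / 2) sequentially"
      using tendstoD[OF xs(2), of "\<delta> / 2"] \<delta>(1) by linarith
    moreover have "eventually (\<lambda>k. \<exists>y'\<in>Sol f h l p (xs k). dist y' y < \<delta> / 2) sequentially"
      using Sol_inner_semicontinuous[OF xs x y, of "\<delta> / 2"] \<delta>(1) by linarith
    ultimately have "eventually (\<lambda>k. ereal (F (x, y) - \<eta>) \<le> phi_p F f h l p (xs k)) sequentially"
    proof eventually_elim
      case (elim k)
      then obtain y' where y': "y' \<in> Sol f h l p (xs k)" "dist y' y < \<delta> / 2" by blast
      have "dist (xs k, y') (x, y) \<le> dist (xs k) x + dist y' y"
        unfolding dist_Pair_Pair by (rule sqrt_sum_squares_le_sum) simp_all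
      then have "F (x, y) - \<eta> \<le> F (xs k, y')"
        using \<delta>(2)[of "(xs k, y')"] elim(1) y'(2) by (simp add: dist_real_def abs_less_iff)
      also have "ereal (F (xs k, y')) \<le> phi_p F f h l p (xs k)"
        unfolding phi_p_def using y'(1) by (intro Sup_upper) simp
      finally show ?case by simp
    qed
    then have "ereal (F (x, y) - \<eta>) \<le> m"
      by (intro tendsto_lowerbound[OF lim]) simp_all
    then show "ereal (F (x, y)) \<le> m + ereal \<eta>"
      by (cases m) auto
  qed
qed

end

theorem theorem4p16:
  fixes F f :: "(real^'n) \<times> (real^'m) \<Rightarrow> real"
    and h :: "nat \<Rightarrow> (real^'n) \<times> (real^'m) \<Rightarrow> real"
    and l p :: nat
    and X :: "(real^'n) set"
  assumes "l \<le> p"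
    and "cont_diff F" and "cont_diff f" and "\<forall>i\<in>{1..p}. cont_diff (h i)"
    and "closed X"
    and "\<forall>x. convex_on UNIV (\<lambda>y. f (x, y))"
    and "\<forall>x. \<forall>i\<in>{1..l}. convex_on UNIV (\<lambda>y. h i (x, y))"
    and "\<forall>x. \<forall>i\<in>{l+1..p}. \<exists>a b. \<forall>y. h i (x, y) = a \<bullet> y + b"
    and "X \<subseteq> domG h l p"
    and "\<forall>x\<in>X. locally_bounded_at (Gam h l p) x"
    and "\<forall>x y. x \<in> X \<and> y \<in> Sol f h l p x \<longrightarrow> RCPLD_S f h l p (domG h l p) x y"
    and "X \<noteq> {}" and "compact X"
  shows "\<exists>x\<in>X. \<forall>z\<in>X. phi_p F f h l p x \<le> phi_p F f h l p z"
proof -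
  interpret lower_level f h l p X
    by unfold_locales (use assms in auto)
  show ?thesis
    using compact_attains_inf_if_seq_lsc[OF \<open>compact X\<close> \<open>X \<noteq> {}\<close>] phi_p_lsc[OF \<open>cont_diff F\<close>] by blast
qed

end
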